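(* Let $\mathcal{A}=(\omega,f)$ and $\mathcal{B}=(\omega,g)$ be computable (2,1):1 structures that are isomorphic, and suppose that the branching functions $\beta_{\mathcal{A}},\beta_{\mathcal{B}}$ and the branch isomorphism functions $iso_{\mathcal{A}}, iso_{\mathcal{B}}$ are all computable. (i) If $a_0\in\omega$ is a non-cyclic element of $\mathcal{A}$ and $b_0\in\omega$ is a non-cyclic element of $\mathcal{B}$ with $Tree_{\mathcal{A}}(a_0)\cong Tree_{\mathcal{B}}(b_0)$, then there is a computable isomorphism from $Tree_{\mathcal{A}}(a_0)$ onto $Tree_{\mathcal{B}}(b_0)$ (i.e. a partial computable function defined on all of $tree_{\mathcal{A}}(a_0)$ whose restriction there is such an isomorphism). (ii) If $c$ is a cyclic element of $\mathcal{A}$ and $d$ is a cyclic element of $\mathcal{B}$ with $exTree_{\mathcal{A}}(c)\cong exTree_{\mathcal{B}}(d)$, then there is a computable isomorphism from $exTree_{\mathcal{A}}(c)$ onto $exTree_{\mathcal{B}}(d)$.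
   Context: A (2,1):1 structure is a pair $\mathcal{A}=(A,f)$ with $A$ a countable set and $f:A\to A$ such that $|f^{-1}(a)|\in\{1,2\}$ for every $a\in A$. It is computable if $A$ is a computable set (here $A=\omega$) and $f$ is a computable function. An element $x$ is cyclic if $f^n(x)=x$ for some $n>0$. For $x\in A$, $tree_{\mathcal{A}}(x)=\{a\in A:\exists n\ge 0\ (f^n(a)=x)\}$, and $Tree_{\mathcal{A}}(x)$ is the directed graph with vertex set $tree_{\mathcal{A}}(x)$ and edge set $\{(a,f(a)): a\in tree_{\mathcal{A}}(x),\ f(a)\in tree_{\mathcal{A}}(x)\}$. If $c$ is a cyclic element lying on a directed cycle with exactly $K$ elements, $extree_{\mathcal{A}}(c)=\{a\in A: \exists n\,[f^n(a)=c \wedge \forall m<n\ (f^{m+K}(a)\neq f^m(a))]\}$ (i.e. $c$ together with the non-cyclic elements whose forward orbit first reaches the cycle at $c$), and $exTree_{\mathcal{A}}(c)$ is the associated directed graph with vertex set $extree_{\mathcal{A}}(c)$ and edges $(a,f(a))$ for $a\in extree_{\mathcal{A}}(c)$, $a\ne c$ (a rooted tree with root $c$). The branching function $\beta_{\mathcal{A}}:A\to\{1,2\}$ is $\beta_{\mathcal{A}}(x)=|f^{-1}(x)|$. The split hair set is $\Lambda_{\mathcal{A}}=\{x:\beta_{\mathcal{A}}(x)=2\}$. The branch isomorphism function $iso_{\mathcal{A}}:\Lambda_{\mathcal{A}}\to\{0,1\}$ is defined, for $x\in\Lambda_{\mathcal{A}}$ with distinct pre-images $x_1,x_2$, by $iso_{\mathcal{A}}(x)=1$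 if $Tree_{\mathcal{A}}(x_1)\cong Tree_{\mathcal{A}}(x_2)$ and $iso_{\mathcal{A}}(x)=0$ otherwise; "computable" for $iso_{\mathcal{A}}$ means it is the restriction to $\Lambda_{\mathcal{A}}$ of a partial computable function. *)

theory Defs
  imports Main
begin

datatype recf = Z | S | Id nat | Cn recf "recf list" | Pr recf recf | Mn recf

inductive eval :: "recf \<Rightarrow> nat list \<Rightarrow> nat \<Rightarrow> bool" where
  eval_Z: "eval Z xs 0"
| eval_S: "eval S (x # xs) (Suc x)"
| eval_Id: "i < length xs \<Longrightarrow> eval (Id i) xs (xs ! i)"
| eval_Cn: "list_all2 (\<lambda>g y. eval g xs y) gs ys \<Longrightarrow> eval f ys z \<Longrightarrow> eval (Cn f gs) xs z"
| eval_Pr0: "eval f xs y \<Longrightarrow> eval (Pr f g) (0 # xs) y"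
| eval_PrS: "eval (Pr f g) (n # xs) y \<Longrightarrow> eval g (n # y # xs) z \<Longrightarrow> eval (Pr f g) (Suc n # xs) z"
| eval_Mn: "eval f (n # xs) 0 \<Longrightarrow> (\<forall>m<n. \<exists>y. eval f (m # xs) (Suc y)) \<Longrightarrow> eval (Mn f) xs n"

definition partial_computable :: "(nat \<Rightarrow> nat option) \<Rightarrow> bool" where
  "partial_computable h \<longleftrightarrow> (\<exists>e. \<forall>x y. eval e [x] y \<longleftrightarrow> h x = Some y)"

definition computable :: "(nat \<Rightarrow> nat) \<Rightarrow> bool" where
  "computable h \<longleftrightarrow> partial_computable (\<lambda>x. Some (h x))"

definition is_21_1 :: "(nat \<Rightarrow> nat) \<Rightarrow> bool" where
  "is_21_1 f \<longleftrightarrow> (\<forall>a. card (f -` {a}) \<in> {1, 2})"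

definition struct_iso :: "(nat \<Rightarrow> nat) \<Rightarrow> (nat \<Rightarrow> nat) \<Rightarrow> bool" where
  "struct_iso f g \<longleftrightarrow> (\<exists>h. bij h \<and> (\<forall>x. h (f x) = g (h x)))"

definition cyclic :: "(nat \<Rightarrow> nat) \<Rightarrow> nat \<Rightarrow> bool" where
  "cyclic f x \<longleftrightarrow> (\<exists>n>0. (f ^^ n) x = x)"

definition branching :: "(nat \<Rightarrow> nat) \<Rightarrow> nat \<Rightarrow> nat" where
  "branching f x = card (f -` {x})"

definition split_hair :: "(nat \<Rightarrow> nat) \<Rightarrow> nat set" where
  "split_hair f = {x. branching f x = 2}"

definition tree :: "(nat \<Rightarrow> nat) \<Rightarrow> nat \<Rightarrow> nat set" where
  "tree f x = {a. \<exists>n. (f ^^ n) a = x}"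

definition digraph_iso ::
  "(nat \<Rightarrow> nat \<Rightarrow> bool) \<Rightarrow> nat set \<Rightarrow> (nat \<Rightarrow> nat \<Rightarrow> bool) \<Rightarrow> nat set \<Rightarrow> (nat \<Rightarrow> nat) \<Rightarrow> bool" where
  "digraph_iso E V E' V' h \<longleftrightarrow> bij_betw h V V' \<and> (\<forall>a\<in>V. \<forall>b\<in>V. E a b \<longleftrightarrow> E' (h a) (h b))"

text \<open>Edge relation of Tree(x): edges (a, f a) with both endpoints in the tree.\<close>
definition tree_edge :: "(nat \<Rightarrow> nat) \<Rightarrow> nat \<Rightarrow> nat \<Rightarrow> bool" where
  "tree_edge f a b \<longleftrightarrow> f a = b"

definition Tree_iso :: "(nat \<Rightarrow> nat) \<Rightarrow> nat \<Rightarrow> (nat \<Rightarrow> nat) \<Rightarrow> nat \<Rightarrow> (nat \<Rightarrow> nat) \<Rightarrow> bool" where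
  "Tree_iso f x g y h \<longleftrightarrow> digraph_iso (tree_edge f) (tree f x) (tree_edge g) (tree g y) h"

definition Tree_isomorphic :: "(nat \<Rightarrow> nat) \<Rightarrow> nat \<Rightarrow> (nat \<Rightarrow> nat) \<Rightarrow> nat \<Rightarrow> bool" where
  "Tree_isomorphic f x g y \<longleftrightarrow> (\<exists>h. Tree_iso f x g y h)"

text \<open>Branch isomorphism function (meaningful on the split hair set).\<close>
definition iso_fun :: "(nat \<Rightarrow> nat) \<Rightarrow> nat \<Rightarrow> nat" where
  "iso_fun f x = (if \<exists>x1 x2. x1 \<noteq> x2 \<and> f x1 = x \<and> f x2 = x \<and> Tree_isomorphic f x1 f x2 then 1 else 0)"

definition iso_computable :: "(nat \<Rightarrow> nat) \<Rightarrow> bool" where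
  "iso_computable f \<longleftrightarrow> (\<exists>\<phi>. partial_computable \<phi> \<and> (\<forall>x\<in>split_hair f. \<phi> x = Some (iso_fun f x)))"

definition cycle_len :: "(nat \<Rightarrow> nat) \<Rightarrow> nat \<Rightarrow> nat" where
  "cycle_len f c = (LEAST k. k > 0 \<and> (f ^^ k) c = c)"

definition extree :: "(nat \<Rightarrow> nat) \<Rightarrow> nat \<Rightarrow> nat set" where
  "extree f c = {a. \<exists>n. (f ^^ n) a = c \<and> (\<forall>m<n. (f ^^ (m + cycle_len f c)) a \<noteq> (f ^^ m) a)}"

definition extree_edge :: "(nat \<Rightarrow> nat) \<Rightarrow> nat \<Rightarrow> nat \<Rightarrow> nat \<Rightarrow> bool" where
  "extree_edge f c a b \<longleftrightarrow> a \<noteq> c \<and> f a = b"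

definition exTree_iso :: "(nat \<Rightarrow> nat) \<Rightarrow> nat \<Rightarrow> (nat \<Rightarrow> nat) \<Rightarrow> nat \<Rightarrow> (nat \<Rightarrow> nat) \<Rightarrow> bool" where
  "exTree_iso f c g d h \<longleftrightarrow> digraph_iso (extree_edge f c) (extree f c) (extree_edge g d) (extree g d) h"

end

theory Submission
  imports Defs "HOL-Library.Nat_Bijection"
begin

text \<open>For a non-cyclic \<open>x\<close> every node of \<open>Tree(x)\<close> has at most two preimages, so the
  isomorphism type of \<open>Tree(x)\<close> is determined by the codes of its truncations at all finite depths,
  and these codes are computable from \<open>f\<close> and \<open>\<beta>\<close>. An isomorphism \<open>Tree(a0) \<cong> Tree(b0)\<close> is
  built greedily, level by level: \<open>a0\<close> goes to \<open>b0\<close>, and the preimages of a node \<open>p\<close> mapped to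
  \<open>q\<close> are matched with those of \<open>q\<close> so that matched nodes have equal codes at every depth. Only
  at a split node is there a choice: if \<open>iso(p) = 1\<close> either matching works; otherwise the first
  preimage of \<open>p\<close> agrees in code with exactly one preimage of \<open>q\<close>, and searching for the least
  depth at which it disagrees with one of them tells which. For a cyclic \<open>c\<close>, \<open>exTree(c)\<close> is
  \<open>c\<close> together with \<open>Tree(z)\<close> for the non-cyclic preimage \<open>z\<close> of \<open>c\<close> (if there is one), which
  reduces part (ii) to part (i).\<close>

section \<open>Closure properties of the mu-recursive functions\<close>

lemma eval_deterministic: "eval e xs y \<Longrightarrow> eval e xs y' \<Longrightarrow> y' = y"
proof (induction arbitrary: y' rule: eval.induct)
  case (eval_Cn xs gs ys f z)
  from eval_Cn.prems obtain ys' where ys': "list_all2 (\<lambda>g y. eval g xs y) gs ys'" "eval f ys' y'"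
    by (cases rule: eval.cases) auto
  have "list_all2 (\<lambda>g y. \<forall>y'. eval g xs y' \<longrightarrow> y' = y) gs ys"
    using eval_Cn.IH(1) by (auto simp: list_all2_conv_all_nth)
  then have "ys' = ys" using ys'(1)
    by (auto simp: list_all2_conv_all_nth intro: nth_equalityI)
  then show ?case using ys' eval_Cn.IH(2) by auto
next
  case (eval_PrS f g n xs y z)
  from eval_PrS.prems show ?case by (cases rule: eval.cases) (use eval_PrS.IH in auto)
next
  case (eval_Mn f n xs)
  from eval_Mn.prems obtain n' where n': "eval f (n' # xs) 0" "\<forall>m<n'. \<exists>y. eval f (m # xs) (Suc y)" "y' = n'"
    by (cases rule: eval.cases) auto
  show ?case
  proof (rule linorder_cases[of n' n])
    assume "n' < n"
    then obtain y where "eval f (n' # xs) (Suc y)" "\<forall>y'. eval f (n' # xs) y' \<longrightarrow> y' = Suc y"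
      using eval_Mn.IH(2) by blast
    then show ?thesis using n' by force
  next
    assume "n < n'"
    then obtain y where "eval f (n # xs) (Suc y)" using n' by blast
    then show ?thesis using eval_Mn.IH(1) by force
  qed (use n' in simp)
next
  case (eval_Pr0 f xs y)
  from eval_Pr0.prems show ?case by (cases rule: eval.cases) (use eval_Pr0.IH in auto)
next
  case (eval_Z xs) from eval_Z.prems show ?case by (cases rule: eval.cases) auto
next
  case (eval_S x xs) from eval_S.prems show ?case by (cases rule: eval.cases) auto
next
  case (eval_Id i xs) from eval_Id.prems show ?case by (cases rule: eval.cases) auto
qed

definition total_rec :: "nat \<Rightarrow> (nat list \<Rightarrow> nat) \<Rightarrow> bool" where
  "total_rec n F \<longleftrightarrow> (\<exists>e. \<forall>xs. length xs = n \<longrightarrow> eval e xs (F xs))"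

definition partial_rec :: "nat \<Rightarrow> (nat list \<Rightarrow> nat option) \<Rightarrow> bool" where
  "partial_rec n F \<longleftrightarrow> (\<exists>e. \<forall>xs. length xs = n \<longrightarrow> (\<forall>y. eval e xs y \<longleftrightarrow> F xs = Some y))"

definition rec_pred :: "nat \<Rightarrow> (nat list \<Rightarrow> bool) \<Rightarrow> bool" where
  "rec_pred n P \<longleftrightarrow> total_rec n (\<lambda>xs. if P xs then 1 else 0)"

lemma total_rec_program:
  "total_rec n F \<Longrightarrow> \<exists>e. \<forall>xs. length xs = n \<longrightarrow> (\<forall>y. eval e xs y \<longleftrightarrow> y = F xs)"
  unfolding total_rec_def using eval_deterministic by blast

lemma partial_rec_Some_iff: "partial_rec n (\<lambda>xs. Some (F xs)) \<longleftrightarrow> total_rec n F"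
  using total_rec_program[of n F] unfolding partial_rec_def total_rec_def by (metis option.inject)

lemma total_rec_cong: "total_rec n F \<Longrightarrow> (\<And>xs. length xs = n \<Longrightarrow> F xs = G xs) \<Longrightarrow> total_rec n G"
  unfolding total_rec_def by auto

lemma partial_rec_cong: "partial_rec n F \<Longrightarrow> (\<And>xs. length xs = n \<Longrightarrow> F xs = G xs) \<Longrightarrow> partial_rec n G"
  unfolding partial_rec_def by auto

lemma partial_computable_iff_partial_rec: "partial_computable \<phi> \<longleftrightarrow> partial_rec 1 (\<lambda>xs. \<phi> (xs ! 0))"
  unfolding partial_computable_def partial_rec_def
  by (intro ex_cong1 iffI allI impI) (auto simp: length_Suc_conv)

lemma computable_iff_total_rec: "computable h \<longleftrightarrow> total_rec 1 (\<lambda>xs. h (xs ! 0))"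
  unfolding computable_def partial_computable_iff_partial_rec partial_rec_Some_iff ..

primrec const_prog :: "nat \<Rightarrow> recf" where
  "const_prog 0 = Z"
| "const_prog (Suc c) = Cn S [const_prog c]"

lemma eval_const_prog: "eval (const_prog c) xs c"
  by (induction c) (auto intro!: eval.intros)

lemma total_rec_const: "total_rec n (\<lambda>xs. c)"
  unfolding total_rec_def using eval_const_prog by blast

lemma total_rec_proj: "i < n \<Longrightarrow> total_rec n (\<lambda>xs. xs ! i)"
  unfolding total_rec_def by (auto intro!: exI[of _ "Id i"] eval.intros)

lemma total_rec_Suc_proj: "total_rec 1 (\<lambda>xs. Suc (xs ! 0))"
  unfolding total_rec_def by (rule exI[of _ S]) (auto simp: length_Suc_conv intro: eval.intros)

lemma eval_proj_list: "length xs = n \<Longrightarrow> list_all2 (\<lambda>g y. eval g xs y) (map Id [0..<n]) xs"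
  by (auto simp: list_all2_conv_all_nth intro: eval_Id)

lemma eval_proj_list_unique:
  "length xs = n \<Longrightarrow> list_all2 (\<lambda>g y. eval g xs y) (map Id [0..<n]) ys \<Longrightarrow> ys = xs"
  by (auto simp: list_all2_conv_all_nth intro!: nth_equalityI elim: eval.cases)

lemma partial_rec_comp:
  assumes H: "partial_rec m H" and len: "length Gs = m" and G: "\<forall>G\<in>set Gs. total_rec n G"
  shows "partial_rec n (\<lambda>xs. H (map (\<lambda>G. G xs) Gs))"
proof -
  obtain eh where eh: "\<forall>xs. length xs = m \<longrightarrow> (\<forall>y. eval eh xs y \<longleftrightarrow> H xs = Some y)"
    using H unfolding partial_rec_def by blast
  define es where "es = map (\<lambda>G. SOME e. \<forall>xs. length xs = n \<longrightarrow> (\<forall>y. eval e xs y \<longleftrightarrow> y = G xs)) Gs"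
  have es: "\<forall>i<length Gs. \<forall>xs. length xs = n \<longrightarrow> (\<forall>y. eval (es ! i) xs y \<longleftrightarrow> y = (Gs ! i) xs)"
  proof (intro allI impI)
    fix i y and xs :: "nat list" assume i: "i < length Gs" and xs: "length xs = n"
    have "\<exists>e. \<forall>xs. length xs = n \<longrightarrow> (\<forall>y. eval e xs y \<longleftrightarrow> y = (Gs ! i) xs)"
      using G i total_rec_program by auto
    then have "\<forall>xs. length xs = n \<longrightarrow> (\<forall>y. eval (SOME e. \<forall>xs. length xs = n \<longrightarrow> (\<forall>y. eval e xs y \<longleftrightarrow> y = (Gs ! i) xs)) xs y \<longleftrightarrow> y = (Gs ! i) xs)"
      by (rule someI_ex)
    then show "eval (es ! i) xs y \<longleftrightarrow> y = (Gs ! i) xs" using i xs unfolding es_def by auto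
  qed
  have ys: "list_all2 (\<lambda>g y. eval g xs y) es ys \<longleftrightarrow> ys = map (\<lambda>G. G xs) Gs" if xs: "length xs = n" for xs ys
  proof
    have le: "length es = length Gs" unfolding es_def by simp
    assume "list_all2 (\<lambda>g y. eval g xs y) es ys"
    then have "length ys = length Gs" "\<forall>i<length Gs. eval (es ! i) xs (ys ! i)"
      using le by (auto simp: list_all2_conv_all_nth)
    then show "ys = map (\<lambda>G. G xs) Gs" using es xs by (intro nth_equalityI) auto
  next
    have le: "length es = length Gs" unfolding es_def by simp
    assume "ys = map (\<lambda>G. G xs) Gs"
    then show "list_all2 (\<lambda>g y. eval g xs y) es ys" using es xs le by (auto simp: list_all2_conv_all_nth)
  qed
  show ?thesis unfolding partial_rec_def
  proof (intro exI[of _ "Cn eh es"] allI impI)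
    fix y and xs :: "nat list" assume xs: "length xs = n"
    show "eval (Cn eh es) xs y = (H (map (\<lambda>G. G xs) Gs) = Some y)"
    proof
      assume "eval (Cn eh es) xs y"
      then show "H (map (\<lambda>G. G xs) Gs) = Some y"
        by (cases rule: eval.cases) (use ys[OF xs] eh len in auto)
    next
      assume "H (map (\<lambda>G. G xs) Gs) = Some y"
      then show "eval (Cn eh es) xs y"
        using ys[OF xs] eh len by (auto intro!: eval_Cn[where ys = "map (\<lambda>G. G xs) Gs"])
    qed
  qed
qed

lemma total_rec_comp:
  "total_rec m H \<Longrightarrow> length Gs = m \<Longrightarrow> \<forall>G\<in>set Gs. total_rec n G \<Longrightarrow>
    total_rec n (\<lambda>xs. H (map (\<lambda>G. G xs) Gs))"
  using partial_rec_comp[of m "\<lambda>xs. Some (H xs)"] by (simp add: partial_rec_Some_iff)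

primrec prim_rec :: "(nat list \<Rightarrow> nat) \<Rightarrow> (nat list \<Rightarrow> nat) \<Rightarrow> nat \<Rightarrow> nat list \<Rightarrow> nat" where
  "prim_rec I St 0 xs = I xs"
| "prim_rec I St (Suc k) xs = St (k # prim_rec I St k xs # xs)"

lemma total_rec_prim_rec:
  assumes I: "total_rec n I" and St: "total_rec (Suc (Suc n)) St"
  shows "total_rec (Suc n) (\<lambda>ys. prim_rec I St (hd ys) (tl ys))"
proof -
  obtain ei where ei: "\<forall>xs. length xs = n \<longrightarrow> eval ei xs (I xs)" using I unfolding total_rec_def by blast
  obtain es where es: "\<forall>xs. length xs = Suc (Suc n) \<longrightarrow> eval es xs (St xs)" using St unfolding total_rec_def by blast
  have "eval (Pr ei es) (k # xs) (prim_rec I St k xs)" if "length xs = n" for k xs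
    using that proof (induction k)
    case 0 then show ?case using ei by (auto intro: eval.intros)
  next
    case (Suc k)
    then show ?case using es by (auto intro!: eval_PrS)
  qed
  then show ?thesis unfolding total_rec_def by (intro exI[of _ "Pr ei es"]) (auto simp: length_Suc_conv)
qed

lemma total_rec_prim_rec_at:
  assumes I: "total_rec n I" and St: "total_rec (Suc (Suc n)) St" and K: "total_rec n K"
  shows "total_rec n (\<lambda>xs. prim_rec I St (K xs) xs)"
proof -
  have "total_rec n (\<lambda>xs. (\<lambda>ys. prim_rec I St (hd ys) (tl ys)) (map (\<lambda>G. G xs) (K # map (\<lambda>i xs. xs ! i) [0..<n])))"
    by (rule total_rec_comp[OF total_rec_prim_rec[OF I St]]) (auto intro: K total_rec_proj)
  then show ?thesis
    by (rule total_rec_cong) (auto intro!: nth_equalityI arg_cong[where f="prim_rec I St (K _)"])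
qed

primrec partial_prim_rec :: "(nat list \<Rightarrow> nat option) \<Rightarrow> (nat list \<Rightarrow> nat option) \<Rightarrow> nat \<Rightarrow> nat list \<Rightarrow> nat option" where
  "partial_prim_rec I St 0 xs = I xs"
| "partial_prim_rec I St (Suc k) xs = (case partial_prim_rec I St k xs of None \<Rightarrow> None | Some y \<Rightarrow> St (k # y # xs))"

lemma partial_rec_prim_rec:
  assumes I: "partial_rec n I" and St: "partial_rec (Suc (Suc n)) St"
  shows "partial_rec (Suc n) (\<lambda>ys. partial_prim_rec I St (hd ys) (tl ys))"
proof -
  obtain ei where ei: "\<forall>xs. length xs = n \<longrightarrow> (\<forall>y. eval ei xs y \<longleftrightarrow> I xs = Some y)"
    using I unfolding partial_rec_def by blast
  obtain es where es: "\<forall>xs. length xs = Suc (Suc n) \<longrightarrow> (\<forall>y. eval es xs y \<longleftrightarrow> St xs = Some y)"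
    using St unfolding partial_rec_def by blast
  have "\<forall>y. eval (Pr ei es) (k # xs) y \<longleftrightarrow> partial_prim_rec I St k xs = Some y" if "length xs = n" for k xs
  proof (induction k)
    case 0
    show ?case
    proof (intro allI iffI)
      fix y assume "eval (Pr ei es) (0 # xs) y" then show "partial_prim_rec I St 0 xs = Some y"
        by (cases rule: eval.cases) (use ei that in auto)
    next
      fix y assume "partial_prim_rec I St 0 xs = Some y" then show "eval (Pr ei es) (0 # xs) y"
        using ei that by (auto intro: eval.intros)
    qed
  next
    case (Suc k)
    show ?case
    proof (intro allI iffI)
      fix y assume "eval (Pr ei es) (Suc k # xs) y" then show "partial_prim_rec I St (Suc k) xs = Some y"
        by (cases rule: eval.cases) (use es that Suc in auto)
    next
      fix y assume "partial_prim_rec I St (Suc k) xs = Some y" then show "eval (Pr ei es) (Suc k # xs) y"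
        using es that Suc by (auto intro: eval.intros split: option.splits)
    qed
  qed
  then show ?thesis unfolding partial_rec_def by (intro exI[of _ "Pr ei es"]) (auto simp: length_Suc_conv)
qed

lemma total_rec_Mn:
  assumes P: "total_rec (Suc n) P" and ex: "\<And>xs. length xs = n \<Longrightarrow> \<exists>k. P (k # xs) = 0"
  shows "total_rec n (\<lambda>xs. LEAST k. P (k # xs) = 0)"
proof -
  obtain ep where ep: "\<forall>xs. length xs = Suc n \<longrightarrow> eval ep xs (P xs)" using P unfolding total_rec_def by blast
  show ?thesis unfolding total_rec_def
  proof (intro exI[of _ "Mn ep"] allI impI)
    fix xs :: "nat list" assume xs: "length xs = n"
    let ?k = "LEAST k. P (k # xs) = 0"
    have k: "P (?k # xs) = 0" using ex[OF xs] by (rule LeastI_ex)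
    have "\<forall>m<?k. \<exists>y. eval ep (m # xs) (Suc y)"
    proof (intro allI impI)
      fix m assume "m < ?k"
      then have "P (m # xs) \<noteq> 0" using not_less_Least by blast
      then obtain y where "P (m # xs) = Suc y" using not0_implies_Suc by blast
      then show "\<exists>y. eval ep (m # xs) (Suc y)" using ep xs by (metis length_Cons)
    qed
    moreover have "eval ep (?k # xs) 0" using ep xs k by (metis length_Cons)
    ultimately show "eval (Mn ep) xs ?k" by (auto intro: eval_Mn)
  qed
qed

lemma partial_rec_Mn:
  assumes P: "total_rec (Suc n) P"
  shows "partial_rec n (\<lambda>xs. if \<exists>k. P (k # xs) = 0 then Some (LEAST k. P (k # xs) = 0) else None)"
proof -
  obtain ep where ep: "\<forall>xs. length xs = Suc n \<longrightarrow> (\<forall>y. eval ep xs y \<longleftrightarrow> y = P xs)"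
    using total_rec_program[OF P] by blast
  show ?thesis unfolding partial_rec_def
  proof (intro exI[of _ "Mn ep"] allI impI)
    fix y and xs :: "nat list" assume xs: "length xs = n"
    show "eval (Mn ep) xs y = ((if \<exists>k. P (k # xs) = 0 then Some (LEAST k. P (k # xs) = 0) else None) = Some y)"
    proof
      assume "eval (Mn ep) xs y"
      then have "P (y # xs) = 0" "\<forall>m<y. P (m # xs) \<noteq> 0"
        by (cases rule: eval.cases; use ep xs in force)+
      then show "(if \<exists>k. P (k # xs) = 0 then Some (LEAST k. P (k # xs) = 0) else None) = Some y"
        by (auto intro!: Least_equality) (metis leI less_irrefl)
    next
      assume a: "(if \<exists>k. P (k # xs) = 0 then Some (LEAST k. P (k # xs) = 0) else None) = Some y"
      then have ex: "\<exists>k. P (k # xs) = 0" by (auto split: if_splits)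
      with a have y: "y = (LEAST k. P (k # xs) = 0)" by auto
      have k: "P (y # xs) = 0" using ex y by (auto intro: LeastI_ex)
      have "\<forall>m<y. \<exists>z. eval ep (m # xs) (Suc z)"
      proof (intro allI impI)
        fix m assume "m < y"
        then have "P (m # xs) \<noteq> 0" using not_less_Least y by blast
        then obtain z where "P (m # xs) = Suc z" using not0_implies_Suc by blast
        then show "\<exists>z. eval ep (m # xs) (Suc z)" using ep xs by (metis length_Cons)
      qed
      moreover have "eval ep (y # xs) 0" using ep xs k by (metis length_Cons)
      ultimately show "eval (Mn ep) xs y" by (auto intro: eval_Mn)
    qed
  qed
qed

subsection \<open>Arithmetic, decidable predicates and pairing\<close>

lemma total_rec_app1: "total_rec 1 (\<lambda>ys. h (ys ! 0)) \<Longrightarrow> total_rec n A \<Longrightarrow> total_rec n (\<lambda>xs. h (A xs))"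
  using total_rec_comp[of 1 "\<lambda>ys. h (ys ! 0)" "[A]" n] by simp

lemma total_rec_app2: "total_rec 2 (\<lambda>ys. h (ys ! 0) (ys ! 1)) \<Longrightarrow>
    total_rec n A \<Longrightarrow> total_rec n B \<Longrightarrow> total_rec n (\<lambda>xs. h (A xs) (B xs))"
  using total_rec_comp[of 2 "\<lambda>ys. h (ys ! 0) (ys ! 1)" "[A, B]" n] by simp

lemma total_rec_app3: "total_rec 3 (\<lambda>ys. h (ys ! 0) (ys ! 1) (ys ! 2)) \<Longrightarrow> total_rec n A \<Longrightarrow>
    total_rec n B \<Longrightarrow> total_rec n C \<Longrightarrow> total_rec n (\<lambda>xs. h (A xs) (B xs) (C xs))"
  using total_rec_comp[of 3 "\<lambda>ys. h (ys ! 0) (ys ! 1) (ys ! 2)" "[A, B, C]" n] by simp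

lemma total_rec_Suc: "total_rec n A \<Longrightarrow> total_rec n (\<lambda>xs. Suc (A xs))"
  by (rule total_rec_app1[OF total_rec_Suc_proj])

lemma total_rec_prim_rec_nth: "total_rec n I \<Longrightarrow> total_rec (Suc m) St \<Longrightarrow>
    m = Suc n \<Longrightarrow> total_rec m (\<lambda>ys. prim_rec I St (ys ! 0) (tl ys))"
proof -
  assume a: "total_rec n I" "total_rec (Suc m) St" "m = Suc n"
  have "total_rec (Suc n) (\<lambda>ys. prim_rec I St (hd ys) (tl ys))" using total_rec_prim_rec[of n I St] a by simp
  then have "total_rec (Suc n) (\<lambda>ys. prim_rec I St (ys ! 0) (tl ys))" by (rule total_rec_cong) (auto simp: length_Suc_conv)
  then show ?thesis using a(3) by simp
qed

lemma total_rec_add_proj: "total_rec 2 (\<lambda>ys. ys ! 0 + ys ! 1)"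
proof -
  have T: "total_rec 2 (\<lambda>ys. prim_rec (\<lambda>xs. xs ! 0) (\<lambda>ys. Suc (ys ! 1)) (ys ! 0) (tl ys))"
    by (rule total_rec_prim_rec_nth[where n=1]; (intro total_rec_proj total_rec_Suc)?; simp)
  have E: "prim_rec (\<lambda>xs. xs ! 0) (\<lambda>ys. Suc (ys ! 1)) k xs = xs ! 0 + k" for k xs
    by (induction k) auto
  show ?thesis
    by (rule total_rec_cong[OF T]; subst E; auto simp: numeral_2_eq_2 length_Suc_conv)
qed

lemma total_rec_plus: "total_rec n A \<Longrightarrow> total_rec n B \<Longrightarrow> total_rec n (\<lambda>xs. A xs + B xs)"
  by (rule total_rec_app2[OF total_rec_add_proj])

lemma total_rec_pred_proj: "total_rec 1 (\<lambda>ys. ys ! 0 - 1)"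
proof -
  have T: "total_rec 1 (\<lambda>ys. prim_rec (\<lambda>xs. 0) (\<lambda>ys. ys ! 0) (ys ! 0) (tl ys))"
    by (rule total_rec_prim_rec_nth[where n=0]; (intro total_rec_proj total_rec_const)?; simp)
  have E: "prim_rec (\<lambda>xs. 0) (\<lambda>ys. ys ! 0) k xs = k - 1" for k xs
    by (induction k) auto
  show ?thesis by (rule total_rec_cong[OF T]; subst E; auto simp:)
qed

lemma total_rec_diff_proj: "total_rec 2 (\<lambda>ys. ys ! 1 - ys ! 0)"
proof -
  have T: "total_rec 2 (\<lambda>ys. prim_rec (\<lambda>xs. xs ! 0) (\<lambda>ys. ys ! 1 - 1) (ys ! 0) (tl ys))"
    by (rule total_rec_prim_rec_nth[where n=1]; (intro total_rec_proj total_rec_app1[OF total_rec_pred_proj])?; simp)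
  have E: "prim_rec (\<lambda>xs. xs ! 0) (\<lambda>ys. ys ! 1 - 1) k xs = xs ! 0 - k" for k xs
    by (induction k) auto
  show ?thesis
    by (rule total_rec_cong[OF T]; subst E; auto simp: numeral_2_eq_2 length_Suc_conv)
qed

lemma total_rec_minus: "total_rec n A \<Longrightarrow> total_rec n B \<Longrightarrow> total_rec n (\<lambda>xs. A xs - B xs)"
  by (rule total_rec_app2[OF total_rec_diff_proj])

lemma total_rec_mult_proj: "total_rec 2 (\<lambda>ys. ys ! 0 * ys ! 1)"
proof -
  have T: "total_rec 2 (\<lambda>ys. prim_rec (\<lambda>xs. 0) (\<lambda>ys. ys ! 1 + ys ! 2) (ys ! 0) (tl ys))"
    by (rule total_rec_prim_rec_nth[where n=1]; (intro total_rec_proj total_rec_const total_rec_plus)?; simp)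
  have E: "prim_rec (\<lambda>xs. 0) (\<lambda>ys. ys ! 1 + ys ! 2) k xs = k * xs ! 0" for k xs
    by (induction k) auto
  show ?thesis
    by (rule total_rec_cong[OF T]; subst E; auto simp: numeral_2_eq_2 length_Suc_conv)
qed

lemma total_rec_times: "total_rec n A \<Longrightarrow> total_rec n B \<Longrightarrow> total_rec n (\<lambda>xs. A xs * B xs)"
  by (rule total_rec_app2[OF total_rec_mult_proj])

lemma total_rec_cond_proj: "total_rec 3 (\<lambda>ys. if ys ! 0 = 0 then ys ! 1 else ys ! 2)"
proof -
  have T: "total_rec 3 (\<lambda>ys. prim_rec (\<lambda>xs. xs ! 0) (\<lambda>ys. ys ! 3) (ys ! 0) (tl ys))"
    by (rule total_rec_prim_rec_nth[where n=2]; (intro total_rec_proj)?; simp)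
  have E: "prim_rec (\<lambda>xs. xs ! 0) (\<lambda>ys. ys ! 3) k xs = (if k = 0 then xs ! 0 else xs ! 1)" for k xs
    by (cases k) auto
  show ?thesis
    by (rule total_rec_cong[OF T]; subst E; auto simp: numeral_3_eq_3 length_Suc_conv)
qed

lemma total_rec_if: "rec_pred n P \<Longrightarrow> total_rec n A \<Longrightarrow>
    total_rec n B \<Longrightarrow> total_rec n (\<lambda>xs. if P xs then A xs else B xs)"
  unfolding rec_pred_def
  by (drule (2) total_rec_app3[OF total_rec_cond_proj]) (erule total_rec_cong, auto)

lemma rec_pred_eq: "total_rec n A \<Longrightarrow> total_rec n B \<Longrightarrow> rec_pred n (\<lambda>xs. A xs = B xs)"
  unfolding rec_pred_def
proof -
  assume a: "total_rec n A" "total_rec n B"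
  have "total_rec n (\<lambda>xs. 1 - ((A xs - B xs) + (B xs - A xs)))" by (intro total_rec_minus total_rec_plus total_rec_const a)
  then show "total_rec n (\<lambda>xs. if A xs = B xs then 1 else 0)" by (rule total_rec_cong) auto
qed

lemma rec_pred_less: "total_rec n A \<Longrightarrow> total_rec n B \<Longrightarrow> rec_pred n (\<lambda>xs. A xs < B xs)"
  unfolding rec_pred_def
proof -
  assume a: "total_rec n A" "total_rec n B"
  have "total_rec n (\<lambda>xs. 1 - (1 - (B xs - A xs)))" by (intro total_rec_minus total_rec_const a)
  then show "total_rec n (\<lambda>xs. if A xs < B xs then 1 else 0)" by (rule total_rec_cong) auto
qed

lemma rec_pred_not: "rec_pred n P \<Longrightarrow> rec_pred n (\<lambda>xs. \<not> P xs)"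
  unfolding rec_pred_def
proof -
  assume a: "total_rec n (\<lambda>xs. if P xs then 1 else 0)"
  have "total_rec n (\<lambda>xs. 1 - (if P xs then 1 else (0::nat)))" by (rule total_rec_minus[OF total_rec_const a])
  then show "total_rec n (\<lambda>xs. if \<not> P xs then 1 else 0)" by (rule total_rec_cong) auto
qed

lemma rec_pred_conj: "rec_pred n P \<Longrightarrow> rec_pred n Q \<Longrightarrow> rec_pred n (\<lambda>xs. P xs \<and> Q xs)"
  unfolding rec_pred_def
proof -
  assume a: "total_rec n (\<lambda>xs. if P xs then 1 else 0)" "total_rec n (\<lambda>xs. if Q xs then 1 else 0)"
  have "total_rec n (\<lambda>xs. (if P xs then 1 else 0) * (if Q xs then 1 else (0::nat)))" by (rule total_rec_times[OF a])
  then show "total_rec n (\<lambda>xs. if P xs \<and> Q xs then 1 else 0)" by (rule total_rec_cong) auto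
qed

lemma rec_pred_disj: "rec_pred n P \<Longrightarrow> rec_pred n Q \<Longrightarrow> rec_pred n (\<lambda>xs. P xs \<or> Q xs)"
  using rec_pred_not[OF rec_pred_conj[OF rec_pred_not rec_pred_not], of n P Q] by simp

lemma rec_pred_le: "total_rec n A \<Longrightarrow> total_rec n B \<Longrightarrow> rec_pred n (\<lambda>xs. A xs \<le> B xs)"
  using rec_pred_not[OF rec_pred_less, of n B A] by (simp add: not_less)

lemma rec_pred_neq: "total_rec n A \<Longrightarrow> total_rec n B \<Longrightarrow> rec_pred n (\<lambda>xs. A xs \<noteq> B xs)"
  by (rule rec_pred_not[OF rec_pred_eq])

lemma total_rec_LEAST:
  assumes "rec_pred (Suc n) P" and "\<And>xs. length xs = n \<Longrightarrow> \<exists>k. P (k # xs)"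
  shows "total_rec n (\<lambda>xs. LEAST k. P (k # xs))"
proof -
  have "total_rec (Suc n) (\<lambda>xs. 1 - (if P xs then 1 else 0))"
    using assms(1) unfolding rec_pred_def by (intro total_rec_minus total_rec_const)
  then have "total_rec n (\<lambda>xs. LEAST k. 1 - (if P (k # xs) then 1 else 0) = (0::nat))"
    by (rule total_rec_Mn) (use assms(2) in auto)
  then show ?thesis by (rule total_rec_cong) auto
qed

lemma partial_rec_LEAST:
  assumes "rec_pred (Suc n) P"
  shows "partial_rec n (\<lambda>xs. if \<exists>k. P (k # xs) then Some (LEAST k. P (k # xs)) else None)"
proof -
  have "total_rec (Suc n) (\<lambda>xs. 1 - (if P xs then 1 else 0))"
    using assms(1) unfolding rec_pred_def by (intro total_rec_minus total_rec_const)
  then have "partial_rec n (\<lambda>xs. if \<exists>k. 1 - (if P (k # xs) then 1 else 0) = (0::nat) then Some (LEAST k. 1 - (if P (k # xs) then 1 else 0) = (0::nat)) else None)"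
    by (rule partial_rec_Mn)
  then show ?thesis by (rule partial_rec_cong) auto
qed

lemma total_rec_computable: "computable h \<Longrightarrow> total_rec n A \<Longrightarrow> total_rec n (\<lambda>xs. h (A xs))"
  by (simp add: computable_iff_total_rec total_rec_app1)

lemma total_rec_triangle_proj: "total_rec 1 (\<lambda>ys. triangle (ys ! 0))"
proof -
  have T: "total_rec 1 (\<lambda>ys. prim_rec (\<lambda>xs. 0) (\<lambda>ys. ys ! 1 + Suc (ys ! 0)) (ys ! 0) (tl ys))"
    by (rule total_rec_prim_rec_nth[where n=0]; (intro total_rec_proj total_rec_const total_rec_plus total_rec_Suc)?; simp)
  have E: "prim_rec (\<lambda>xs. 0) (\<lambda>ys. ys ! 1 + Suc (ys ! 0)) k xs = triangle k" for k xs
    by (induction k) auto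
  show ?thesis by (rule total_rec_cong[OF T]; subst E; auto simp:)
qed

lemma total_rec_triangle: "total_rec n A \<Longrightarrow> total_rec n (\<lambda>xs. triangle (A xs))"
  by (rule total_rec_app1[OF total_rec_triangle_proj])

lemma total_rec_prod_encode: assumes "total_rec n A" "total_rec n B" shows "total_rec n (\<lambda>xs. prod_encode (A xs, B xs))"
  unfolding prod_encode_def by (simp, intro total_rec_plus total_rec_triangle assms)

definition diag_sum :: "nat \<Rightarrow> nat" where "diag_sum z = (LEAST s. z < triangle (Suc s))"

lemma triangle_mono: "a \<le> b \<Longrightarrow> triangle a \<le> triangle b"
  by (induction b) (auto simp: le_Suc_eq)

lemma diag_sum_prod_encode: "diag_sum (prod_encode (m, k)) = m + k"
  unfolding diag_sum_def
proof (rule Least_equality)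
  show "prod_encode (m, k) < triangle (Suc (m + k))" by (simp add: prod_encode_def)
next
  fix y assume y: "prod_encode (m, k) < triangle (Suc y)"
  show "m + k \<le> y"
  proof (rule ccontr)
    assume "\<not> m + k \<le> y"
    then have "Suc y \<le> m + k" by simp
    then have "triangle (Suc y) \<le> triangle (m + k)" by (rule triangle_mono)
    then show False using y by (simp add: prod_encode_def)
  qed
qed

lemma fst_prod_decode_eq: "fst (prod_decode z) = z - triangle (diag_sum z)"
proof -
  obtain m k where mk: "prod_decode z = (m, k)" by (cases "prod_decode z")
  then have z: "z = prod_encode (m, k)" by (metis prod_decode_inverse)
  show ?thesis unfolding z by (simp only: diag_sum_prod_encode prod_encode_inverse) (simp add: prod_encode_def)
qed

lemma snd_prod_decode_eq: "snd (prod_decode z) = diag_sum z - fst (prod_decode z)"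
proof -
  obtain m k where mk: "prod_decode z = (m, k)" by (cases "prod_decode z")
  then have z: "z = prod_encode (m, k)" by (metis prod_decode_inverse)
  show ?thesis unfolding z by (simp add: diag_sum_prod_encode)
qed

lemma total_rec_diag_sum: assumes A: "total_rec n A" shows "total_rec n (\<lambda>xs. diag_sum (A xs))"
proof -
  have "total_rec 1 (\<lambda>xs. LEAST k. (\<lambda>ys. ys ! 1 < triangle (Suc (ys ! 0))) (k # xs))"
  proof (rule total_rec_LEAST)
    show "rec_pred (Suc 1) (\<lambda>ys. ys ! 1 < triangle (Suc (ys ! 0)))"
      by (intro rec_pred_less total_rec_triangle total_rec_Suc total_rec_proj) auto
    fix xs :: "nat list"
    show "\<exists>k. (\<lambda>ys. ys ! 1 < triangle (Suc (ys ! 0))) (k # xs)"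
      by (rule exI[of _ "xs ! 0"]) simp
  qed
  then have "total_rec 1 (\<lambda>ys. diag_sum (ys ! 0))" by (rule total_rec_cong) (simp add: diag_sum_def)
  then show ?thesis by (rule total_rec_app1) fact
qed

lemma total_rec_fst_decode: assumes "total_rec n A" shows "total_rec n (\<lambda>xs. fst (prod_decode (A xs)))"
  unfolding fst_prod_decode_eq by (intro total_rec_minus total_rec_triangle total_rec_diag_sum assms)

lemma total_rec_snd_decode: assumes "total_rec n A" shows "total_rec n (\<lambda>xs. snd (prod_decode (A xs)))"
  unfolding snd_prod_decode_eq fst_prod_decode_eq by (intro total_rec_minus total_rec_triangle total_rec_diag_sum assms)

lemma total_rec_funpow: assumes h: "total_rec 1 (\<lambda>ys. h (ys ! 0))" and K: "total_rec n K" and A: "total_rec n A"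
  shows "total_rec n (\<lambda>xs. (h ^^ K xs) (A xs))"
proof -
  have T: "total_rec n (\<lambda>xs. prim_rec A (\<lambda>ys. h (ys ! 1)) (K xs) xs)"
    by (rule total_rec_prim_rec_at[OF A _ K]) (rule total_rec_app1[OF h], rule total_rec_proj, simp)
  have E: "prim_rec A (\<lambda>ys. h (ys ! 1)) k xs = (h ^^ k) (A xs)" for k xs
    by (induction k) auto
  show ?thesis by (rule total_rec_cong[OF T]; subst E; simp)
qed

lemma total_rec_min: assumes "total_rec n A" "total_rec n B" shows "total_rec n (\<lambda>xs. min (A xs) (B xs))"
  unfolding min_def by (intro total_rec_if rec_pred_le assms)

lemma total_rec_max: assumes "total_rec n A" "total_rec n B" shows "total_rec n (\<lambda>xs. max (A xs) (B xs))"
  unfolding max_def by (intro total_rec_if rec_pred_le assms)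

lemma partial_rec_bind:
  assumes A: "partial_rec n A" and B: "partial_rec (Suc n) B"
  shows "partial_rec n (\<lambda>xs. case A xs of None \<Rightarrow> None | Some y \<Rightarrow> B (y # xs))"
proof -
  obtain ea where ea: "\<forall>xs. length xs = n \<longrightarrow> (\<forall>y. eval ea xs y \<longleftrightarrow> A xs = Some y)"
    using A unfolding partial_rec_def by blast
  obtain eb where eb: "\<forall>xs. length xs = Suc n \<longrightarrow> (\<forall>y. eval eb xs y \<longleftrightarrow> B xs = Some y)"
    using B unfolding partial_rec_def by blast
  show ?thesis unfolding partial_rec_def
  proof (intro exI[of _ "Cn eb (ea # map Id [0..<n])"] allI impI)
    fix z and xs :: "nat list" assume xs: "length xs = n"
    show "eval (Cn eb (ea # map Id [0..<n])) xs z = ((case A xs of None \<Rightarrow> None | Some y \<Rightarrow> B (y # xs)) = Some z)"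
    proof
      assume "eval (Cn eb (ea # map Id [0..<n])) xs z"
      then obtain ys where "list_all2 (\<lambda>g y. eval g xs y) (ea # map Id [0..<n]) ys" "eval eb ys z"
        by (cases rule: eval.cases) auto
      then obtain y ys' where "ys = y # ys'" "eval ea xs y" "list_all2 (\<lambda>g y. eval g xs y) (map Id [0..<n]) ys'" "eval eb ys z"
        by (auto simp: list_all2_Cons1)
      moreover have "ys' = xs" using eval_proj_list_unique[OF xs] \<open>list_all2 (\<lambda>g y. eval g xs y) (map Id [0..<n]) ys'\<close> by auto
      ultimately show "(case A xs of None \<Rightarrow> None | Some y \<Rightarrow> B (y # xs)) = Some z"
        using ea eb xs by auto
    next
      assume "(case A xs of None \<Rightarrow> None | Some y \<Rightarrow> B (y # xs)) = Some z"
      then obtain y where y: "A xs = Some y" "B (y # xs) = Some z" by (auto split: option.splits)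
      show "eval (Cn eb (ea # map Id [0..<n])) xs z"
        apply (rule eval_Cn[where ys = "y # xs"])
        using y ea eb xs eval_proj_list[OF xs] by auto
    qed
  qed
qed

lemma partial_rec_let:
  "partial_rec n A \<Longrightarrow> total_rec (Suc n) B \<Longrightarrow>
    partial_rec n (\<lambda>xs. case A xs of None \<Rightarrow> None | Some y \<Rightarrow> Some (B (y # xs)))"
  using partial_rec_bind[of n A "\<lambda>ys. Some (B ys)"] by (simp add: partial_rec_Some_iff)

lemmas rec_intros = total_rec_const total_rec_proj total_rec_Suc total_rec_plus total_rec_minus
  total_rec_times total_rec_if total_rec_prod_encode total_rec_fst_decode total_rec_snd_decode
  total_rec_triangle total_rec_min total_rec_max
  rec_pred_eq rec_pred_neq rec_pred_less rec_pred_le rec_pred_not rec_pred_conj rec_pred_disj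

section \<open>Preimages and codes of finite-depth truncations of trees\<close>

definition pre1 :: "(nat \<Rightarrow> nat) \<Rightarrow> nat \<Rightarrow> nat" where
  "pre1 f x = (LEAST y. f y = x)"

definition pre2 :: "(nat \<Rightarrow> nat) \<Rightarrow> nat \<Rightarrow> nat" where
  "pre2 f x = (LEAST y. (branching f x = 2 \<and> f y = x \<and> y \<noteq> pre1 f x) \<or> (branching f x \<noteq> 2 \<and> y = pre1 f x))"

lemma preimage_cases:
  assumes "is_21_1 f"
  shows "(branching f x = 1 \<and> (\<exists>a. f -` {x} = {a})) \<or>
      (branching f x = 2 \<and> (\<exists>a b. a \<noteq> b \<and> f -` {x} = {a, b}))"
proof -
  have "card (f -` {x}) \<in> {1, 2}" using assms unfolding is_21_1_def by auto
  then show ?thesis unfolding branching_def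
    by (auto simp: card_1_singleton_iff card_2_iff)
qed

lemma ex_preimage: "is_21_1 f \<Longrightarrow> \<exists>y. f y = x"
  using preimage_cases[of f x] by (metis insertI1 vimage_singleton_eq)

lemma f_pre1: "is_21_1 f \<Longrightarrow> f (pre1 f x) = x"
  unfolding pre1_def using ex_preimage by (rule LeastI_ex)

lemma pre2_ex: "is_21_1 f \<Longrightarrow>
    \<exists>y. (branching f x = 2 \<and> f y = x \<and> y \<noteq> pre1 f x) \<or> (branching f x \<noteq> 2 \<and> y = pre1 f x)"
proof -
  assume f: "is_21_1 f"
  show ?thesis
  proof (cases "branching f x = 2")
    case True
    then obtain a b where ab: "a \<noteq> b" "f -` {x} = {a, b}" using preimage_cases[OF f, of x] by auto
    have "f a = x" "f b = x" using ab by auto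
    then show ?thesis using True ab(1) by (metis)
  qed auto
qed

lemma pre2_prop: "is_21_1 f \<Longrightarrow>
    (branching f x = 2 \<and> f (pre2 f x) = x \<and> pre2 f x \<noteq> pre1 f x) \<or> (branching f x \<noteq> 2 \<and> pre2 f x = pre1 f x)"
  unfolding pre2_def by (rule LeastI_ex) (rule pre2_ex)

lemma f_pre2: "is_21_1 f \<Longrightarrow> f (pre2 f x) = x"
  using pre2_prop[of f x] f_pre1[of f x] by auto

lemma pre2_eq_pre1: "is_21_1 f \<Longrightarrow> branching f x \<noteq> 2 \<Longrightarrow> pre2 f x = pre1 f x"
  using pre2_prop by blast

lemma pre2_neq_pre1: "is_21_1 f \<Longrightarrow> branching f x = 2 \<Longrightarrow> pre2 f x \<noteq> pre1 f x"
  using pre2_prop by blast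

lemma preimage_eq: "is_21_1 f \<Longrightarrow> f -` {x} = {pre1 f x, pre2 f x}"
proof -
  assume f: "is_21_1 f"
  have p1: "pre1 f x \<in> f -` {x}" "pre2 f x \<in> f -` {x}" using f_pre1[OF f] f_pre2[OF f] by auto
  from preimage_cases[OF f, of x] show ?thesis
  proof
    assume "branching f x = 1 \<and> (\<exists>a. f -` {x} = {a})"
    then obtain a where a: "f -` {x} = {a}" by auto
    with p1 have "pre1 f x = a" "pre2 f x = a" by auto
    then show ?thesis using a by simp
  next
    assume a: "branching f x = 2 \<and> (\<exists>a b. a \<noteq> b \<and> f -` {x} = {a, b})"
    then have ne: "pre2 f x \<noteq> pre1 f x" using pre2_neq_pre1[OF f] by auto
    from a obtain a' b' where ab: "a' \<noteq> b'" "f -` {x} = {a', b'}" by auto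
    have "{pre1 f x, pre2 f x} = f -` {x}"
      by (rule card_seteq) (use ab ne p1 in auto)
    then show ?thesis by simp
  qed
qed

lemma preimage_iff: "is_21_1 f \<Longrightarrow> f y = x \<longleftrightarrow> y = pre1 f x \<or> y = pre2 f x"
  using preimage_eq[of f x] by auto

text \<open>\<open>tree_code f x n\<close> codes the isomorphism type of \<open>Tree(x)\<close> cut off at depth \<open>n\<close>; taking
  \<open>min\<close> and \<open>max\<close> makes it independent of the order of the two preimages.\<close>

fun tree_code :: "(nat \<Rightarrow> nat) \<Rightarrow> nat \<Rightarrow> nat \<Rightarrow> nat" where
  "tree_code f x 0 = 0"
| "tree_code f x (Suc n) = Suc (prod_encode (branching f x,
      prod_encode (min (tree_code f (pre1 f x) n) (tree_code f (pre2 f x) n),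
                   max (tree_code f (pre1 f x) n) (tree_code f (pre2 f x) n))))"

definition code_equiv :: "(nat \<Rightarrow> nat) \<Rightarrow> (nat \<Rightarrow> nat) \<Rightarrow> nat \<Rightarrow> nat \<Rightarrow> bool" where
  "code_equiv f g x y \<longleftrightarrow> (\<forall>n. tree_code f x n = tree_code g y n)"

lemma minmax_eq: "(min (a::nat) b = min c d \<and> max a b = max c d) \<longleftrightarrow> (a = c \<and> b = d) \<or> (a = d \<and> b = c)"
  by (auto simp: min_def max_def)

lemma tree_code_Suc_eq: "tree_code f x (Suc n) = tree_code g y (Suc n) \<longleftrightarrow> branching f x = branching g y \<and>
   ((tree_code f (pre1 f x) n = tree_code g (pre1 g y) n \<and> tree_code f (pre2 f x) n = tree_code g (pre2 g y) n) \<or>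
    (tree_code f (pre1 f x) n = tree_code g (pre2 g y) n \<and> tree_code f (pre2 f x) n = tree_code g (pre1 g y) n))"
  by (simp add: minmax_eq[symmetric])

lemma tree_code_eq_Suc_imp: "tree_code f x (Suc n) = tree_code g y (Suc n) \<Longrightarrow> tree_code f x n = tree_code g y n"
proof (induction n arbitrary: x y)
  case 0 then show ?case by simp
next
  case (Suc n)
  then show ?case unfolding tree_code_Suc_eq[of f x "Suc n"] tree_code_Suc_eq[of f x n] by blast
qed

lemma tree_code_eq_mono: "m \<le> n \<Longrightarrow> tree_code f x n = tree_code g y n \<Longrightarrow> tree_code f x m = tree_code g y m"
proof (induction n rule: dec_induct)
  case base then show ?case .
next
  case (step k) then show ?case using tree_code_eq_Suc_imp by blast
qed

lemma code_equiv_branching: "code_equiv f g x y \<Longrightarrow> branching f x = branching g y"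
proof -
  assume "code_equiv f g x y"
  then have "tree_code f x (Suc 0) = tree_code g y (Suc 0)" unfolding code_equiv_def by blast
  then show ?thesis by (simp only: tree_code_Suc_eq)
qed

lemma code_equiv_trans: "code_equiv f g x y \<Longrightarrow> code_equiv g h y z \<Longrightarrow> code_equiv f h x z"
  unfolding code_equiv_def by auto

lemma code_equiv_sym: "code_equiv f g x y \<Longrightarrow> code_equiv g f y x"
  unfolding code_equiv_def by auto

lemma code_equiv_children:
  assumes E: "code_equiv f g x y"
  shows "(code_equiv f g (pre1 f x) (pre1 g y) \<and> code_equiv f g (pre2 f x) (pre2 g y)) \<or>
         (code_equiv f g (pre1 f x) (pre2 g y) \<and> code_equiv f g (pre2 f x) (pre1 g y))"
proof -
  let ?a = "tree_code f (pre1 f x)" and ?b = "tree_code f (pre2 f x)" and ?c = "tree_code g (pre1 g y)" and ?d = "tree_code g (pre2 g y)"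
  have step: "(?a n = ?c n \<and> ?b n = ?d n) \<or> (?a n = ?d n \<and> ?b n = ?c n)" for n
  proof -
    have "tree_code f x (Suc n) = tree_code g y (Suc n)" using E unfolding code_equiv_def by blast
    then show ?thesis by (simp only: tree_code_Suc_eq)
  qed
  show ?thesis
  proof (cases "\<forall>n. ?a n = ?c n")
    case True
    then have "\<forall>n. ?b n = ?d n" using step by metis
    then show ?thesis using True unfolding code_equiv_def by auto
  next
    case False
    then obtain N where N: "?a N \<noteq> ?c N" by auto
    have ad: "?a n = ?d n" for n
    proof -
      have "?a (max n N) \<noteq> ?c (max n N)"
        using N tree_code_eq_mono[of N "max n N" f "pre1 f x" g "pre1 g y"] by (metis max.cobounded2)
      then have "?a (max n N) = ?d (max n N)" using step by blast
      then show ?thesis using tree_code_eq_mono by (metis max.cobounded1)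
    qed
    then have "?b n = ?c n" for n using step by metis
    then show ?thesis using ad unfolding code_equiv_def by auto
  qed
qed

lemma tree_preimage: "a \<in> tree f x \<Longrightarrow> f c = a \<Longrightarrow> c \<in> tree f x"
proof -
  assume a: "a \<in> tree f x" and c: "f c = a"
  then obtain n where "(f ^^ n) a = x" unfolding tree_def by auto
  moreover have "(f ^^ Suc n) c = (f ^^ n) (f c)" by (simp add: funpow_swap1)
  ultimately have "(f ^^ Suc n) c = x" using c by simp
  then show ?thesis unfolding tree_def by blast
qed

lemma root_in_tree: "x \<in> tree f x"
  unfolding tree_def by (auto intro: exI[of _ 0])

lemma tree_code_Suc_eq_if_bij:
  assumes f: "is_21_1 f" and g: "is_21_1 g" and m: "bij_betw m (f -` {a}) (g -` {b})"
    and IH: "\<And>ch. f ch = a \<Longrightarrow> tree_code f ch n = tree_code g (m ch) n"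
  shows "tree_code f a (Suc n) = tree_code g b (Suc n)"
proof -
  have "branching f a = branching g b"
    unfolding branching_def using bij_betw_same_card[OF m] .
  moreover have "{m (pre1 f a), m (pre2 f a)} = {pre1 g b, pre2 g b}"
    using bij_betw_imp_surj_on[OF m] preimage_eq[OF f, of a] preimage_eq[OF g, of b] by auto
  moreover have "tree_code f (pre1 f a) n = tree_code g (m (pre1 f a)) n"
    "tree_code f (pre2 f a) n = tree_code g (m (pre2 f a)) n"
    using IH f_pre1[OF f] f_pre2[OF f] by auto
  ultimately show ?thesis
    unfolding tree_code_Suc_eq by (auto simp: doubleton_eq_iff)
qed

lemma Tree_iso_preimage_bij:
  assumes h: "Tree_iso f x g y h" and a: "a \<in> tree f x"
  shows "bij_betw h (f -` {a}) (g -` {h a})"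
proof -
  have bij: "bij_betw h (tree f x) (tree g y)"
    and edge: "\<forall>a\<in>tree f x. \<forall>b\<in>tree f x. f a = b \<longleftrightarrow> g (h a) = h b"
    using h unfolding Tree_iso_def digraph_iso_def tree_edge_def by auto
  have sub: "f -` {a} \<subseteq> tree f x" using a tree_preimage by blast
  have "g -` {h a} \<subseteq> h ` (f -` {a})"
  proof
    fix b assume b: "b \<in> g -` {h a}"
    have "b \<in> tree g y" using b tree_preimage bij_betw_apply[OF bij a] by blast
    then obtain c where c: "c \<in> tree f x" "h c = b" using bij by (metis bij_betw_def imageE)
    then have "f c = a" using edge a b by auto
    then show "b \<in> h ` (f -` {a})" using c by auto
  qed
  moreover have "h ` (f -` {a}) \<subseteq> g -` {h a}" using sub edge a by auto
  ultimately show ?thesis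
    unfolding bij_betw_def using inj_on_subset[OF bij_betw_imp_inj_on[OF bij] sub] by blast
qed

lemma Tree_iso_code_equiv:
  assumes f: "is_21_1 f" and g: "is_21_1 g" and h: "Tree_iso f x g y h" and a: "a \<in> tree f x"
  shows "code_equiv f g a (h a)"
proof -
  have "\<forall>a\<in>tree f x. tree_code f a n = tree_code g (h a) n" for n
  proof (induction n)
    case (Suc n)
    show ?case
    proof
      fix a assume a: "a \<in> tree f x"
      show "tree_code f a (Suc n) = tree_code g (h a) (Suc n)"
        by (rule tree_code_Suc_eq_if_bij[OF f g Tree_iso_preimage_bij[OF h a]])
          (use Suc.IH a tree_preimage in blast)
    qed
  qed simp
  then show ?thesis unfolding code_equiv_def using a by blast
qed

lemma funpow_commute: "(f ^^ m) ((f ^^ n) x) = (f ^^ n) ((f ^^ m) x)"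
  by (metis add.commute funpow_add comp_apply)

lemma not_cyclic_below: "\<not> cyclic f x \<Longrightarrow> (f ^^ n) y = x \<Longrightarrow> \<not> cyclic f y"
  unfolding cyclic_def by (metis funpow_commute)

lemma depth_unique_less: "\<not> cyclic f x \<Longrightarrow> (f ^^ n) a = x \<Longrightarrow>
    (f ^^ m) a = x \<Longrightarrow> n < m \<Longrightarrow> False"
proof -
  assume nc: "\<not> cyclic f x" and n: "(f ^^ n) a = x" and m: "(f ^^ m) a = x" and lt: "n < m"
  have "(f ^^ (m - n)) x = x" using n m lt by (metis funpow_add le_add_diff_inverse2 less_imp_le comp_apply)
  then show False using nc lt unfolding cyclic_def by (metis zero_less_diff)
qed

lemma depth_unique: "\<not> cyclic f x \<Longrightarrow> (f ^^ n) a = x \<Longrightarrow> (f ^^ m) a = x \<Longrightarrow> n = m"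
  by (metis depth_unique_less linorder_neqE_nat)

definition depth :: "(nat \<Rightarrow> nat) \<Rightarrow> nat \<Rightarrow> nat \<Rightarrow> nat" where
  "depth f x a = (LEAST n. (f ^^ n) a = x)"

lemma depth_eq: "\<not> cyclic f x \<Longrightarrow> (f ^^ n) a = x \<Longrightarrow> depth f x a = n"
  unfolding depth_def by (rule Least_equality) (auto dest: depth_unique)

lemma funpow_depth: "a \<in> tree f x \<Longrightarrow> (f ^^ depth f x a) a = x"
  unfolding depth_def tree_def by (auto intro: LeastI_ex)

lemma depth_root: "\<not> cyclic f x \<Longrightarrow> depth f x x = 0"
  by (rule depth_eq) auto

lemma depth_Suc:
  assumes nc: "\<not> cyclic f x" and a: "a \<in> tree f x" and ne: "a \<noteq> x"
  shows "f a \<in> tree f x \<and> depth f x a = Suc (depth f x (f a))"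
proof -
  obtain d where d: "depth f x a = Suc d" using funpow_depth[OF a] ne by (cases "depth f x a") auto
  then have "(f ^^ d) (f a) = x" using funpow_depth[OF a] by (simp add: funpow_swap1)
  then show ?thesis using d depth_eq[OF nc] unfolding tree_def by auto
qed

lemma f_root_notin_tree: "\<not> cyclic f x \<Longrightarrow> f x \<notin> tree f x"
proof
  assume nc: "\<not> cyclic f x" and "f x \<in> tree f x"
  then obtain n where "(f ^^ n) (f x) = x" unfolding tree_def by auto
  then have "(f ^^ Suc n) x = x" by (simp add: funpow_swap1)
  then show False using nc unfolding cyclic_def by blast
qed

section \<open>The greedy isomorphism\<close>

definition match_children :: "(nat \<Rightarrow> nat) \<Rightarrow> (nat \<Rightarrow> nat) \<Rightarrow> (nat \<Rightarrow> nat \<Rightarrow> bool) \<Rightarrow> nat \<Rightarrow> nat \<Rightarrow> nat \<Rightarrow> nat" where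
  "match_children f g s p q ch = (if ch = pre1 f p then (if s p q then pre1 g q else pre2 g q) else (if s p q then pre2 g q else pre1 g q))"

definition child_matching :: "(nat \<Rightarrow> nat) \<Rightarrow> (nat \<Rightarrow> nat) \<Rightarrow> nat \<Rightarrow> nat \<Rightarrow> (nat \<Rightarrow> nat) \<Rightarrow> bool" where
  "child_matching f g p q m \<longleftrightarrow>
     bij_betw m (f -` {p}) (g -` {q}) \<and> (\<forall>ch. f ch = p \<longrightarrow> code_equiv f g ch (m ch))"

lemma child_matchingI:
  assumes "f -` {p} = {a1, a2}" "g -` {q} = {b1, b2}" "a1 = a2 \<longleftrightarrow> b1 = b2"
    and "m a1 = b1" "m a2 = b2" "code_equiv f g a1 b1" "code_equiv f g a2 b2"
  shows "child_matching f g p q m"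
proof -
  have "f ch = p \<Longrightarrow> ch = a1 \<or> ch = a2" for ch using assms(1) by blast
  then show ?thesis
    unfolding child_matching_def bij_betw_def assms(1,2) using assms(3-7) by (auto simp: inj_on_def)
qed

lemma child_matching_apply:
  assumes "child_matching f g p q m" "f ch = p"
  shows "g (m ch) = q" "code_equiv f g ch (m ch)"
  using assms bij_betw_apply[of m "f -` {p}" "g -` {q}" ch] unfolding child_matching_def by auto

lemma child_matching_inj: "child_matching f g p q m \<Longrightarrow> inj_on m (f -` {p})"
  unfolding child_matching_def bij_betw_def by blast

lemma child_matching_surj: "child_matching f g p q m \<Longrightarrow> g b = q \<Longrightarrow> \<exists>ch. f ch = p \<and> m ch = b"
  unfolding child_matching_def bij_betw_def by (metis imageE vimage_singleton_eq)

lemma match_children_correct: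
  assumes f: "is_21_1 f" and g: "is_21_1 g" and E: "code_equiv f g p q"
    and s: "branching f p = 2 \<Longrightarrow> (s p q \<longleftrightarrow> code_equiv f g (pre1 f p) (pre1 g q))"
  shows "child_matching f g p q (match_children f g s p q)"
proof -
  let ?m = "match_children f g s p q"
  have br: "branching f p = branching g q" by (rule code_equiv_branching[OF E])
  have ch: "(code_equiv f g (pre1 f p) (pre1 g q) \<and> code_equiv f g (pre2 f p) (pre2 g q)) \<or>
         (code_equiv f g (pre1 f p) (pre2 g q) \<and> code_equiv f g (pre2 f p) (pre1 g q))"
    by (rule code_equiv_children[OF E])
  have "\<exists>b1 b2. {b1, b2} = {pre1 g q, pre2 g q} \<and> (pre1 f p = pre2 f p \<longleftrightarrow> b1 = b2) \<and>
      ?m (pre1 f p) = b1 \<and> ?m (pre2 f p) = b2 \<and>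
      code_equiv f g (pre1 f p) b1 \<and> code_equiv f g (pre2 f p) b2"
  proof (cases "branching f p = 2")
    case False
    then have "pre2 f p = pre1 f p" "pre2 g q = pre1 g q" using pre2_eq_pre1 f g br by auto
    then show ?thesis using ch unfolding match_children_def by auto
  next
    case True
    then have ne: "pre2 f p \<noteq> pre1 f p" "pre2 g q \<noteq> pre1 g q" using pre2_neq_pre1 f g br by auto
    show ?thesis
    proof (cases "s p q")
      case True
      then have "code_equiv f g (pre1 f p) (pre1 g q)" using s \<open>branching f p = 2\<close> by auto
      moreover from this have "code_equiv f g (pre2 f p) (pre2 g q)"
        using ch by (meson code_equiv_sym code_equiv_trans)
      ultimately show ?thesis using True ne unfolding match_children_def
        by (intro exI[of _ "pre1 g q"] exI[of _ "pre2 g q"]) auto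
    next
      case False
      then have "code_equiv f g (pre1 f p) (pre2 g q) \<and> code_equiv f g (pre2 f p) (pre1 g q)"
        using s \<open>branching f p = 2\<close> ch by auto
      then show ?thesis using False ne unfolding match_children_def
        by (intro exI[of _ "pre2 g q"] exI[of _ "pre1 g q"]) auto
    qed
  qed
  then obtain b1 b2 where b: "{b1, b2} = {pre1 g q, pre2 g q}" "pre1 f p = pre2 f p \<longleftrightarrow> b1 = b2"
    "?m (pre1 f p) = b1" "?m (pre2 f p) = b2" "code_equiv f g (pre1 f p) b1" "code_equiv f g (pre2 f p) b2"
    by blast
  show ?thesis
    by (rule child_matchingI[OF preimage_eq[OF f] _ b(2-6)]) (use b(1) preimage_eq[OF g] in simp)
qed

primrec greedy_map_aux :: "(nat \<Rightarrow> nat) \<Rightarrow> (nat \<Rightarrow> nat \<Rightarrow> nat \<Rightarrow> nat) \<Rightarrow> nat \<Rightarrow> nat \<Rightarrow> nat \<Rightarrow> nat" where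
  "greedy_map_aux f M b0 0 a = b0"
| "greedy_map_aux f M b0 (Suc n) a = M (f a) (greedy_map_aux f M b0 n (f a)) a"

locale greedy_iso =
  fixes f g :: "nat \<Rightarrow> nat" and a0 b0 :: nat and s :: "nat \<Rightarrow> nat \<Rightarrow> bool"
  assumes f21: "is_21_1 f" and g21: "is_21_1 g" and nca: "\<not> cyclic f a0" and ncb: "\<not> cyclic g b0"
    and E0: "code_equiv f g a0 b0"
    and s_ok: "\<And>p q. p \<in> tree f a0 \<Longrightarrow> q \<in> tree g b0 \<Longrightarrow>
        code_equiv f g p q \<Longrightarrow> branching f p = 2 \<Longrightarrow>
                (s p q \<longleftrightarrow> code_equiv f g (pre1 f p) (pre1 g q))"
begin

definition greedy_map :: "nat \<Rightarrow> nat" where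
  "greedy_map a = greedy_map_aux f (match_children f g s) b0 (depth f a0 a) a"

lemma greedy_map_root: "greedy_map a0 = b0"
  unfolding greedy_map_def using depth_root[OF nca] by simp

lemma greedy_map_step: "a \<in> tree f a0 \<Longrightarrow> a \<noteq> a0 \<Longrightarrow>
    greedy_map a = match_children f g s (f a) (greedy_map (f a)) a"
  unfolding greedy_map_def using depth_Suc[OF nca] by simp

lemma greedy_map_invariant: "a \<in> tree f a0 \<Longrightarrow> depth f a0 a = d \<Longrightarrow>
  greedy_map a \<in> tree g b0 \<and> depth g b0 (greedy_map a) = d \<and> code_equiv f g a (greedy_map a)"
proof (induction d arbitrary: a)
  case 0
  then have "a = a0" using funpow_depth by fastforce
  then show ?case using greedy_map_root E0 depth_root[OF ncb] root_in_tree by auto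
next
  case (Suc d)
  have ne: "a \<noteq> a0" using Suc.prems depth_root[OF nca] by auto
  have p: "f a \<in> tree f a0" "depth f a0 (f a) = d" using depth_Suc[OF nca Suc.prems(1) ne] Suc.prems by auto
  let ?q = "greedy_map (f a)"
  have q: "?q \<in> tree g b0" "depth g b0 ?q = d" "code_equiv f g (f a) ?q" using Suc.IH[OF p] by auto
  have "child_matching f g (f a) ?q (match_children f g s (f a) ?q)"
    using match_children_correct[OF f21 g21 q(3), of s] s_ok[OF p(1) q(1) q(3)] by blast
  then have M: "g (match_children f g s (f a) ?q a) = ?q \<and> code_equiv f g a (match_children f g s (f a) ?q a)"
    using child_matching_apply by blast
  have ia: "greedy_map a = match_children f g s (f a) ?q a" by (rule greedy_map_step[OF Suc.prems(1) ne])
  have X: "(g ^^ Suc d) (greedy_map a) = b0" using M ia funpow_depth[OF q(1)] q(2) by (simp add: funpow_swap1)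
  have "greedy_map a \<in> tree g b0" unfolding tree_def using X by blast
  moreover have "depth g b0 (greedy_map a) = Suc d" by (rule depth_eq[OF ncb X])
  ultimately show ?case using M ia by auto
qed

lemma greedy_map_tree: "a \<in> tree f a0 \<Longrightarrow> greedy_map a \<in> tree g b0"
  using greedy_map_invariant by blast

lemma greedy_map_depth: "a \<in> tree f a0 \<Longrightarrow> depth g b0 (greedy_map a) = depth f a0 a"
  using greedy_map_invariant by blast

lemma greedy_map_code_equiv: "a \<in> tree f a0 \<Longrightarrow> code_equiv f g a (greedy_map a)"
  using greedy_map_invariant by blast

lemma greedy_map_match:
  "p \<in> tree f a0 \<Longrightarrow> child_matching f g p (greedy_map p) (match_children f g s p (greedy_map p))"
  using match_children_correct[OF f21 g21 greedy_map_code_equiv, of p s] s_ok[OF _ greedy_map_tree greedy_map_code_equiv] by blast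

lemma greedy_map_edge: "a \<in> tree f a0 \<Longrightarrow> a \<noteq> a0 \<Longrightarrow> g (greedy_map a) = greedy_map (f a)"
  using greedy_map_step greedy_map_match child_matching_apply(1) depth_Suc[OF nca] by metis

lemma greedy_map_inj_depth: "a \<in> tree f a0 \<Longrightarrow> a' \<in> tree f a0 \<Longrightarrow>
    depth f a0 a = d \<Longrightarrow> greedy_map a = greedy_map a' \<Longrightarrow> a = a'"
proof (induction d arbitrary: a a')
  case 0
  have "depth f a0 a' = 0" using greedy_map_depth 0 by metis
  then show ?case using funpow_depth[OF 0(1)] funpow_depth[OF 0(2)] 0(3) by auto
next
  case (Suc d)
  have d': "depth f a0 a' = Suc d" using greedy_map_depth Suc.prems by metis
  have ne: "a \<noteq> a0" "a' \<noteq> a0" using Suc.prems d' depth_root[OF nca] by auto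
  have p: "f a \<in> tree f a0" "depth f a0 (f a) = d" "f a' \<in> tree f a0"
    using depth_Suc[OF nca] Suc.prems ne by auto
  have "greedy_map (f a) = greedy_map (f a')" using greedy_map_edge Suc.prems ne by metis
  then have fa: "f a = f a'" using Suc.IH[OF p(1) p(3) p(2)] by blast
  have "match_children f g s (f a) (greedy_map (f a)) a = match_children f g s (f a) (greedy_map (f a)) a'"
    using greedy_map_step Suc.prems ne fa by metis
  then show ?case using child_matching_inj[OF greedy_map_match[OF p(1)]] fa
    unfolding inj_on_def by auto
qed

lemma greedy_map_inj: "inj_on greedy_map (tree f a0)"
  unfolding inj_on_def using greedy_map_inj_depth by blast

lemma greedy_map_surj_depth: "b \<in> tree g b0 \<Longrightarrow> depth g b0 b = d \<Longrightarrow> \<exists>a\<in>tree f a0. greedy_map a = b"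
proof (induction d arbitrary: b)
  case 0
  then have "b = b0" using funpow_depth by fastforce
  then show ?case using greedy_map_root root_in_tree by auto
next
  case (Suc d)
  have ne: "b \<noteq> b0" using Suc.prems depth_root[OF ncb] by auto
  have q: "g b \<in> tree g b0" "depth g b0 (g b) = d" using depth_Suc[OF ncb Suc.prems(1) ne] Suc.prems by auto
  obtain p where p: "p \<in> tree f a0" "greedy_map p = g b" using Suc.IH[OF q] by blast
  obtain ch where ch: "f ch = p" "match_children f g s p (greedy_map p) ch = b"
    using child_matching_surj[OF greedy_map_match[OF p(1)] p(2)[symmetric]] by blast
  have cht: "ch \<in> tree f a0" using tree_preimage p ch by blast
  have "ch \<noteq> a0" using f_root_notin_tree[OF nca] p ch by auto
  then have "greedy_map ch = b" using greedy_map_step[OF cht] ch by simp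
  then show ?case using cht by blast
qed

lemma greedy_map_Tree_iso: "Tree_iso f a0 g b0 greedy_map"
  unfolding Tree_iso_def digraph_iso_def tree_edge_def
proof (intro conjI ballI)
  show "bij_betw greedy_map (tree f a0) (tree g b0)"
    unfolding bij_betw_def using greedy_map_inj greedy_map_tree greedy_map_surj_depth by blast
next
  fix a b assume a: "a \<in> tree f a0" and b: "b \<in> tree f a0"
  show "f a = b \<longleftrightarrow> g (greedy_map a) = greedy_map b"
  proof
    assume fab: "f a = b"
    then have "a \<noteq> a0" using f_root_notin_tree[OF nca] b by auto
    then show "g (greedy_map a) = greedy_map b" using greedy_map_edge a fab by auto
  next
    assume gab: "g (greedy_map a) = greedy_map b"
    show "f a = b"
    proof (cases "a = a0")
      case True
      then have "g b0 \<in> tree g b0" using gab greedy_map_root greedy_map_tree[OF b] by auto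
      then show ?thesis using f_root_notin_tree[OF ncb] by auto
    next
      case False
      then have "greedy_map (f a) = greedy_map b" "f a \<in> tree f a0" using greedy_map_edge a gab depth_Suc[OF nca] by auto
      then show ?thesis using greedy_map_inj b unfolding inj_on_def by blast
    qed
  qed
qed

end

lemma code_equiv_imp_Tree_isomorphic:
  assumes f: "is_21_1 f" and g: "is_21_1 g" and nx: "\<not> cyclic f x" and ny: "\<not> cyclic g y" and E: "code_equiv f g x y"
  shows "Tree_isomorphic f x g y"
proof -
  interpret greedy_iso f g x y "\<lambda>p q. code_equiv f g (pre1 f p) (pre1 g q)"
    by unfold_locales (use assms in auto)
  show ?thesis unfolding Tree_isomorphic_def using greedy_map_Tree_iso by blast
qed

lemma Tree_iso_root:
  assumes nx: "\<not> cyclic f x" and ny: "\<not> cyclic g y" and h: "Tree_iso f x g y h"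
  shows "h x = y"
proof (rule ccontr)
  assume ne: "h x \<noteq> y"
  have bij: "bij_betw h (tree f x) (tree g y)" and edge: "\<forall>a\<in>tree f x. \<forall>b\<in>tree f x. f a = b \<longleftrightarrow> g (h a) = h b"
    using h unfolding Tree_iso_def digraph_iso_def tree_edge_def by auto
  have hx: "h x \<in> tree g y" using bij root_in_tree by (metis bij_betw_apply)
  then have "g (h x) \<in> tree g y" using depth_Suc[OF ny hx ne] by auto
  then obtain c where c: "c \<in> tree f x" "h c = g (h x)" using bij by (metis bij_betw_def imageE)
  then have "f x = c" using edge root_in_tree by metis
  then show False using f_root_notin_tree[OF nx] c by auto
qed

lemma Tree_isomorphic_imp_code_equiv: "is_21_1 f \<Longrightarrow> is_21_1 g \<Longrightarrow> \<not> cyclic f x \<Longrightarrow>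
    \<not> cyclic g y \<Longrightarrow> Tree_isomorphic f x g y \<Longrightarrow> code_equiv f g x y"
  unfolding Tree_isomorphic_def using Tree_iso_code_equiv Tree_iso_root root_in_tree by metis

lemma Tree_iso_cong: "Tree_iso f x g y h \<Longrightarrow>
    (\<And>a. a \<in> tree f x \<Longrightarrow> h' a = h a) \<Longrightarrow> Tree_iso f x g y h'"
  unfolding Tree_iso_def digraph_iso_def using bij_betw_cong by (metis (no_types, lifting))

section \<open>Computing tree codes\<close>

definition lcons :: "nat \<Rightarrow> nat \<Rightarrow> nat" where "lcons h t = Suc (prod_encode (h, t))"
definition lhd :: "nat \<Rightarrow> nat" where "lhd z = fst (prod_decode (z - 1))"
definition ltl :: "nat \<Rightarrow> nat" where "ltl z = snd (prod_decode (z - 1))"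

lemma lhd_lcons[simp]: "lhd (lcons h t) = h" and ltl_lcons[simp]: "ltl (lcons h t) = t"
  and lcons_ne[simp]: "lcons h t \<noteq> 0"
  unfolding lcons_def lhd_def ltl_def by auto

lemma total_rec_lcons: "total_rec n A \<Longrightarrow> total_rec n B \<Longrightarrow> total_rec n (\<lambda>xs. lcons (A xs) (B xs))"
  unfolding lcons_def by (intro total_rec_Suc total_rec_prod_encode)
lemma total_rec_lhd: "total_rec n A \<Longrightarrow> total_rec n (\<lambda>xs. lhd (A xs))"
  unfolding lhd_def by (intro total_rec_fst_decode total_rec_minus total_rec_const)
lemma total_rec_ltl: "total_rec n A \<Longrightarrow> total_rec n (\<lambda>xs. ltl (A xs))"
  unfolding ltl_def by (intro total_rec_snd_decode total_rec_minus total_rec_const)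

definition eval_task :: "nat \<Rightarrow> nat \<Rightarrow> nat" where "eval_task x n = prod_encode (0, prod_encode (x, n))"
definition combine_task :: "nat \<Rightarrow> nat" where "combine_task x = prod_encode (1, x)"
definition code_node :: "(nat \<Rightarrow> nat) \<Rightarrow> nat \<Rightarrow> nat \<Rightarrow> nat \<Rightarrow> nat" where
  "code_node f x c1 c2 = Suc (prod_encode (branching f x, prod_encode (min c1 c2, max c1 c2)))"

text \<open>A stack machine evaluating \<open>tree_code\<close>. A state encodes a stack of pending tasks and a
  stack of computed codes; the task of coding \<open>x\<close> to depth \<open>n + 1\<close> is replaced by the tasks for the
  two preimages followed by a task combining their codes.\<close>

definition code_step :: "(nat \<Rightarrow> nat) \<Rightarrow> nat \<Rightarrow> nat" where
  "code_step f z =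
    (let tasks = fst (prod_decode z); vals = snd (prod_decode z);
         task = lhd tasks; arg = snd (prod_decode task);
         x = fst (prod_decode arg); n = snd (prod_decode arg) in
     if tasks = 0 then z
     else if fst (prod_decode task) = 0 then
       (if n = 0 then prod_encode (ltl tasks, lcons 0 vals)
        else prod_encode (lcons (eval_task (pre1 f x) (n - 1))
               (lcons (eval_task (pre2 f x) (n - 1)) (lcons (combine_task x) (ltl tasks))), vals))
     else prod_encode (ltl tasks, lcons (code_node f arg (lhd (ltl vals)) (lhd vals)) (ltl (ltl vals))))"

lemma code_step_halted: "fst (prod_decode z) = 0 \<Longrightarrow> (code_step f ^^ k) z = z"
  by (induction k) (auto simp: code_step_def Let_def)

lemma code_step_eval_0: "code_step f (prod_encode (lcons (eval_task x 0) T, V)) = prod_encode (T, lcons 0 V)"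
  unfolding code_step_def eval_task_def by (simp add: Let_def)

lemma code_step_eval_Suc: "code_step f (prod_encode (lcons (eval_task x (Suc n)) T, V)) =
   prod_encode (lcons (eval_task (pre1 f x) n) (lcons (eval_task (pre2 f x) n) (lcons (combine_task x) T)), V)"
  unfolding code_step_def eval_task_def by (simp add: Let_def)

lemma code_step_combine: "code_step f (prod_encode (lcons (combine_task x) T, lcons c2 (lcons c1 V))) = prod_encode (T, lcons (code_node f x c1 c2) V)"
  unfolding code_step_def combine_task_def by (simp add: Let_def)

lemma code_step_run: "\<exists>m. (code_step f ^^ m) (prod_encode (lcons (eval_task x n) T, V)) = prod_encode (T, lcons (tree_code f x n) V)"
proof (induction n arbitrary: x T V)
  case 0
  show ?case by (rule exI[of _ 1]) (simp add: code_step_eval_0)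
next
  case (Suc n)
  obtain m1 where m1: "(code_step f ^^ m1) (prod_encode (lcons (eval_task (pre1 f x) n) (lcons (eval_task (pre2 f x) n) (lcons (combine_task x) T)), V))
     = prod_encode (lcons (eval_task (pre2 f x) n) (lcons (combine_task x) T), lcons (tree_code f (pre1 f x) n) V)"
    using Suc.IH by blast
  obtain m2 where m2: "(code_step f ^^ m2) (prod_encode (lcons (eval_task (pre2 f x) n) (lcons (combine_task x) T), lcons (tree_code f (pre1 f x) n) V))
     = prod_encode (lcons (combine_task x) T, lcons (tree_code f (pre2 f x) n) (lcons (tree_code f (pre1 f x) n) V))"
    using Suc.IH by blast
  have fa: "\<And>a b x. (code_step f ^^ (a + b)) x = (code_step f ^^ a) ((code_step f ^^ b) x)" by (simp add: funpow_add)
  have "(code_step f ^^ (Suc m2 + (m1 + Suc 0))) (prod_encode (lcons (eval_task x (Suc n)) T, V))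
      = code_step f ((code_step f ^^ m2) ((code_step f ^^ m1) (code_step f (prod_encode (lcons (eval_task x (Suc n)) T, V)))))"
    by (simp only: fa funpow.simps comp_apply id_apply)
  also have "\<dots> = prod_encode (T, lcons (tree_code f x (Suc n)) V)"
    by (simp only: code_step_eval_Suc m1 m2 code_step_combine) (simp add: code_node_def)
  finally show ?case by blast
qed

definition code_init :: "nat \<Rightarrow> nat \<Rightarrow> nat" where
  "code_init x n = prod_encode (lcons (eval_task x n) 0, 0)"

definition code_run_length :: "(nat \<Rightarrow> nat) \<Rightarrow> nat \<Rightarrow> nat \<Rightarrow> nat" where
  "code_run_length f x n = (LEAST m. fst (prod_decode ((code_step f ^^ m) (code_init x n))) = 0)"

lemma code_init_run:
  "\<exists>m. (code_step f ^^ m) (code_init x n) = prod_encode (0, lcons (tree_code f x n) 0)"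
  using code_step_run[of f x n 0 0] unfolding code_init_def by blast

lemma tree_code_by_machine:
  "tree_code f x n = lhd (snd (prod_decode ((code_step f ^^ code_run_length f x n) (code_init x n))))"
proof -
  obtain m where m: "(code_step f ^^ m) (code_init x n) = prod_encode (0, lcons (tree_code f x n) 0)"
    using code_init_run by blast
  let ?P = "\<lambda>m. fst (prod_decode ((code_step f ^^ m) (code_init x n))) = 0"
  have "?P m" using m by simp
  then have halted: "?P (code_run_length f x n)" and le: "code_run_length f x n \<le> m"
    unfolding code_run_length_def by (rule LeastI, rule Least_le)
  have "(code_step f ^^ m) (code_init x n) =
      (code_step f ^^ (m - code_run_length f x n)) ((code_step f ^^ code_run_length f x n) (code_init x n))"
    using le by (metis funpow_add le_add_diff_inverse2 comp_apply)
  also have "\<dots> = (code_step f ^^ code_run_length f x n) (code_init x n)"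
    using code_step_halted[OF halted] by simp
  finally have "(code_step f ^^ code_run_length f x n) (code_init x n) = prod_encode (0, lcons (tree_code f x n) 0)"
    using m by simp
  then show ?thesis by simp
qed

lemma total_rec_pre1: assumes f: "computable f" "is_21_1 f" and A: "total_rec n A" shows "total_rec n (\<lambda>xs. pre1 f (A xs))"
proof -
  have T: "total_rec 1 (\<lambda>xs. LEAST k. (\<lambda>ys. f (ys ! 0) = ys ! 1) (k # xs))"
  proof (rule total_rec_LEAST)
    show "rec_pred (Suc 1) (\<lambda>ys. f (ys ! 0) = ys ! 1)" by (intro rec_pred_eq total_rec_computable[OF f(1)] total_rec_proj) auto
    fix xs :: "nat list" show "\<exists>k. (\<lambda>ys. f (ys ! 0) = ys ! 1) (k # xs)" using ex_preimage[OF f(2)] by simp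
  qed
  have "total_rec 1 (\<lambda>ys. pre1 f (ys ! 0))" by (rule total_rec_cong[OF T]) (simp add: pre1_def)
  then show ?thesis by (rule total_rec_app1) (rule A)
qed

lemma total_rec_pre2: assumes f: "computable f" "is_21_1 f" "computable (branching f)" and A: "total_rec n A" shows "total_rec n (\<lambda>xs. pre2 f (A xs))"
proof -
  let ?P = "\<lambda>ys. (branching f (ys ! 1) = 2 \<and> f (ys ! 0) = ys ! 1 \<and>
      ys ! 0 \<noteq> pre1 f (ys ! 1)) \<or> (branching f (ys ! 1) \<noteq> 2 \<and> ys ! 0 = pre1 f (ys ! 1))"
  have T: "total_rec 1 (\<lambda>xs. LEAST k. ?P (k # xs))"
  proof (rule total_rec_LEAST)
    show "rec_pred (Suc 1) ?P"
      by (intro rec_pred_disj rec_pred_conj rec_pred_eq rec_pred_neq total_rec_computable[OF f(1)] total_rec_computable[OF f(3)] total_rec_pre1[OF f(1,2)] total_rec_proj total_rec_const) auto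
    fix xs :: "nat list" show "\<exists>k. ?P (k # xs)" using pre2_ex[OF f(2)] by simp
  qed
  have "total_rec 1 (\<lambda>ys. pre2 f (ys ! 0))" by (rule total_rec_cong[OF T]) (simp add: pre2_def)
  then show ?thesis by (rule total_rec_app1) (rule A)
qed

lemma total_rec_code_init: "total_rec n A \<Longrightarrow> total_rec n B \<Longrightarrow> total_rec n (\<lambda>xs. code_init (A xs) (B xs))"
  unfolding code_init_def eval_task_def by (intro total_rec_prod_encode total_rec_lcons total_rec_const)

lemma total_rec_tree_code:
  assumes f: "computable f" "is_21_1 f" "computable (branching f)"
    and A: "total_rec n A" and B: "total_rec n B"
  shows "total_rec n (\<lambda>xs. tree_code f (A xs) (B xs))"
proof -
  have step: "total_rec 1 (\<lambda>ys. code_step f (ys ! 0))"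
    unfolding code_step_def eval_task_def combine_task_def code_node_def Let_def
    by (intro rec_intros total_rec_lcons total_rec_lhd total_rec_ltl total_rec_pre1[OF f(1,2)]
        total_rec_pre2[OF f] total_rec_computable[OF f(3)]; simp)
  have "total_rec 2 (\<lambda>xs. LEAST m. (\<lambda>ys. fst (prod_decode ((code_step f ^^ (ys ! 0))
      (code_init (ys ! 1) (ys ! 2)))) = 0) (m # xs))"
  proof (rule total_rec_LEAST)
    show "rec_pred (Suc 2) (\<lambda>ys. fst (prod_decode ((code_step f ^^ (ys ! 0)) (code_init (ys ! 1) (ys ! 2)))) = 0)"
      by (intro rec_pred_eq total_rec_fst_decode total_rec_funpow[OF step] total_rec_code_init
          total_rec_proj total_rec_const; simp)
  next
    fix xs :: "nat list"
    obtain m where "(code_step f ^^ m) (code_init (xs ! 0) (xs ! 1)) = prod_encode (0, lcons (tree_code f (xs ! 0) (xs ! 1)) 0)"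
      using code_init_run by blast
    then show "\<exists>m. (\<lambda>ys. fst (prod_decode ((code_step f ^^ (ys ! 0)) (code_init (ys ! 1) (ys ! 2)))) = 0) (m # xs)"
      by (intro exI[of _ m]) simp
  qed
  then have run_length: "total_rec 2 (\<lambda>xs. code_run_length f (xs ! 0) (xs ! 1))"
    by (rule total_rec_cong) (simp add: code_run_length_def)
  have "total_rec 2 (\<lambda>xs. lhd (snd (prod_decode ((code_step f ^^ code_run_length f (xs ! 0) (xs ! 1))
      (code_init (xs ! 0) (xs ! 1))))))"
    by (intro total_rec_lhd total_rec_snd_decode total_rec_funpow[OF step run_length] total_rec_code_init
        total_rec_proj; simp)
  then have "total_rec 2 (\<lambda>ys. tree_code f (ys ! 0) (ys ! 1))"
    by (rule total_rec_cong) (simp only: tree_code_by_machine)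
  then show ?thesis by (rule total_rec_app2) (rule A, rule B)
qed

section \<open>Resolving the choice at split nodes\<close>

text \<open>If \<open>iso(p) = 0\<close>, the first preimage of \<open>p\<close> is code-equivalent to exactly one preimage of
  \<open>q\<close>, so its code differs from that of the other one at some depth; at the least such depth,
  equality with the code of the first preimage of \<open>q\<close> tells which one it is.\<close>

definition split_decided :: "(nat \<Rightarrow> nat) \<Rightarrow> (nat \<Rightarrow> nat) \<Rightarrow> (nat \<Rightarrow> nat) \<Rightarrow> nat \<Rightarrow> nat \<Rightarrow> nat \<Rightarrow> bool" where
  "split_decided f g I p q n \<longleftrightarrow> branching f p \<noteq> 2 \<or> I p = 1 \<or>
      tree_code f (pre1 f p) n \<noteq> tree_code g (pre1 g q) n \<or> tree_code f (pre1 f p) n \<noteq> tree_code g (pre2 g q) n"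

definition match_pre1_at :: "(nat \<Rightarrow> nat) \<Rightarrow> (nat \<Rightarrow> nat) \<Rightarrow> (nat \<Rightarrow> nat) \<Rightarrow> nat \<Rightarrow> nat \<Rightarrow> nat \<Rightarrow> bool" where
  "match_pre1_at f g I p q N \<longleftrightarrow> branching f p \<noteq> 2 \<or> I p = 1 \<or> tree_code f (pre1 f p) N = tree_code g (pre1 g q) N"

definition split_choice :: "(nat \<Rightarrow> nat) \<Rightarrow> (nat \<Rightarrow> nat) \<Rightarrow> (nat \<Rightarrow> nat) \<Rightarrow> nat \<Rightarrow> nat \<Rightarrow> bool" where
  "split_choice f g I p q = match_pre1_at f g I p q (LEAST n. split_decided f g I p q n)"

lemma iso_fun_cases: "iso_fun f p = 1 \<or> iso_fun f p = 0"
  unfolding iso_fun_def by auto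

lemma iso_fun_1_imp:
  assumes f: "is_21_1 f" and "iso_fun f p = 1"
  shows "Tree_isomorphic f (pre1 f p) f (pre2 f p) \<or> Tree_isomorphic f (pre2 f p) f (pre1 f p)"
proof -
  obtain x1 x2 where x: "x1 \<noteq> x2" "f x1 = p" "f x2 = p" "Tree_isomorphic f x1 f x2"
    using assms(2) unfolding iso_fun_def by (auto split: if_splits)
  then have "x1 = pre1 f p \<or> x1 = pre2 f p" "x2 = pre1 f p \<or> x2 = pre2 f p" using preimage_iff[OF f] by auto
  then show ?thesis using x by auto
qed

lemma iso_fun_0_imp:
  assumes f: "is_21_1 f" and b: "branching f p = 2" and "iso_fun f p = 0"
  shows "\<not> Tree_isomorphic f (pre1 f p) f (pre2 f p)"
proof -
  have "pre1 f p \<noteq> pre2 f p" "f (pre1 f p) = p" "f (pre2 f p) = p" using pre2_neq_pre1[OF f b] f_pre1[OF f] f_pre2[OF f] by auto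
  then show ?thesis using assms(3) unfolding iso_fun_def by (auto split: if_splits)
qed

lemma computable_iso_fun_on_split_hair:
  assumes br: "computable (branching f)" and iso: "iso_computable f"
  shows "\<exists>I. computable I \<and> (\<forall>p. branching f p = 2 \<longrightarrow> I p = iso_fun f p)"
proof (cases "split_hair f = {}")
  case True
  then show ?thesis
    unfolding split_hair_def computable_iff_total_rec by (intro exI[of _ "\<lambda>_. 0"]) (auto intro: total_rec_const)
next
  case False
  then obtain s0 where s0: "branching f s0 = 2" unfolding split_hair_def by auto
  obtain \<phi> where \<phi>: "partial_rec 1 (\<lambda>xs. \<phi> (xs ! 0))" "\<forall>x\<in>split_hair f. \<phi> x = Some (iso_fun f x)"
    using iso unfolding iso_computable_def partial_computable_iff_partial_rec by blast
  define sel where "sel x = (if branching f x = 2 then x else s0)" for x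
  \<comment> \<open>\<open>\<phi>\<close> is only known to be correct on the split hair set, so non-split arguments are redirected to \<open>s0\<close>.\<close>
  have "total_rec 1 (\<lambda>xs. sel (xs ! 0))"
    unfolding sel_def by (intro rec_intros rec_pred_eq total_rec_computable[OF br]) auto
  then have "partial_rec 1 (\<lambda>xs. \<phi> (sel (xs ! 0)))"
    using partial_rec_comp[OF \<phi>(1), of "[\<lambda>xs. sel (xs ! 0)]"] by simp
  then have "partial_rec 1 (\<lambda>xs. Some (iso_fun f (sel (xs ! 0))))"
    by (rule partial_rec_cong) (use \<phi>(2) s0 in \<open>auto simp: sel_def split_hair_def\<close>)
  then have "computable (\<lambda>x. iso_fun f (sel x))"
    by (simp add: partial_rec_Some_iff computable_iff_total_rec)
  then show ?thesis by (intro exI[of _ "\<lambda>x. iso_fun f (sel x)"] conjI) (auto simp: sel_def)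
qed

context
  fixes f g :: "nat \<Rightarrow> nat" and I :: "nat \<Rightarrow> nat" and a0 :: nat
  assumes f21: "is_21_1 f" and g21: "is_21_1 g" and nca: "\<not> cyclic f a0"
    and I_iso: "\<And>p. branching f p = 2 \<Longrightarrow> I p = iso_fun f p"
begin

lemma pre_in_tree: "p \<in> tree f a0 \<Longrightarrow> pre1 f p \<in> tree f a0 \<and> pre2 f p \<in> tree f a0"
  using tree_preimage f_pre1[OF f21] f_pre2[OF f21] by blast

lemma not_cyclic_in_tree: "p \<in> tree f a0 \<Longrightarrow> \<not> cyclic f p"
  unfolding tree_def using not_cyclic_below[OF nca] by blast

lemma split_choice_correct:
  assumes p: "p \<in> tree f a0" and E: "code_equiv f g p q"
  shows "(\<exists>n. split_decided f g I p q n) \<and>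
      (branching f p = 2 \<longrightarrow> (split_choice f g I p q \<longleftrightarrow> code_equiv f g (pre1 f p) (pre1 g q)))"
proof (cases "branching f p = 2")
  case False
  then show ?thesis unfolding split_decided_def by auto
next
  case b: True
  have ch: "(code_equiv f g (pre1 f p) (pre1 g q) \<and> code_equiv f g (pre2 f p) (pre2 g q)) \<or>
         (code_equiv f g (pre1 f p) (pre2 g q) \<and> code_equiv f g (pre2 f p) (pre1 g q))" by (rule code_equiv_children[OF E])
  have nc: "\<not> cyclic f (pre1 f p)" "\<not> cyclic f (pre2 f p)" using pre_in_tree[OF p] not_cyclic_in_tree by auto
  show ?thesis
  proof (cases "I p = 1")
    case True
    then have "iso_fun f p = 1" using I_iso b by simp
    then have "code_equiv f f (pre1 f p) (pre2 f p)"
      using iso_fun_1_imp[OF f21] Tree_isomorphic_imp_code_equiv[OF f21 f21] nc code_equiv_sym by metis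
    then have "code_equiv f g (pre1 f p) (pre1 g q)" using ch code_equiv_trans by metis
    moreover have "split_choice f g I p q" unfolding split_choice_def match_pre1_at_def using True by auto
    ultimately show ?thesis unfolding split_decided_def using True by auto
  next
    case False
    then have "iso_fun f p = 0" using I_iso b iso_fun_cases by metis
    then have nE: "\<not> code_equiv f f (pre1 f p) (pre2 f p)"
      using iso_fun_0_imp[OF f21 b] code_equiv_imp_Tree_isomorphic[OF f21 f21 nc] by blast
    have one: "code_equiv f g (pre1 f p) (pre1 g q) \<longleftrightarrow> \<not> code_equiv f g (pre1 f p) (pre2 g q)"
      using ch nE by (meson code_equiv_sym code_equiv_trans)
    have ex: "\<exists>n. split_decided f g I p q n"
    proof (rule ccontr)
      assume "\<not> (\<exists>n. split_decided f g I p q n)"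
      then have "code_equiv f g (pre1 f p) (pre1 g q)" "code_equiv f g (pre1 f p) (pre2 g q)"
        unfolding split_decided_def code_equiv_def by auto
      then show False using one by blast
    qed
    define N where "N = (LEAST n. split_decided f g I p q n)"
    have NN: "split_decided f g I p q N" unfolding N_def using ex by (rule LeastI_ex)
    have "split_choice f g I p q \<longleftrightarrow> code_equiv f g (pre1 f p) (pre1 g q)"
    proof (cases "code_equiv f g (pre1 f p) (pre1 g q)")
      case True
      then show ?thesis unfolding split_choice_def N_def[symmetric] match_pre1_at_def using b False code_equiv_def by auto
    next
      case nt: False
      then have "code_equiv f g (pre1 f p) (pre2 g q)" using one by blast
      then have "tree_code f (pre1 f p) N \<noteq> tree_code g (pre1 g q) N" using NN b False unfolding split_decided_def code_equiv_def by auto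
      then show ?thesis unfolding split_choice_def N_def[symmetric] match_pre1_at_def using b False nt by auto
    qed
    then show ?thesis using ex by auto
  qed
qed

lemma greedy_iso_split_choice: "\<not> cyclic g b0 \<Longrightarrow> code_equiv f g a0 b0 \<Longrightarrow> greedy_iso f g a0 b0 (split_choice f g I)"
  by unfold_locales (use f21 g21 nca split_choice_correct in auto)

end

section \<open>Computability of the greedy isomorphism\<close>

text \<open>The image of \<open>a\<close>, at depth \<open>d\<close> below \<open>a0\<close>, is computed by a recursion of length \<open>d\<close>.
  Step \<open>i\<close> receives the arguments \<open>[i, q, d, a]\<close>, where \<open>q\<close> is the image of the ancestor
  \<open>(f ^^ (d - i)) a\<close>, and searches for the depth \<open>k\<close> (prepended) that resolves the choice there.\<close>

definition split_decided_args :: "(nat \<Rightarrow> nat) \<Rightarrow> (nat \<Rightarrow> nat) \<Rightarrow> (nat \<Rightarrow> nat) \<Rightarrow> nat list \<Rightarrow> bool" where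
  "split_decided_args f g I zs = split_decided f g I ((f ^^ (zs ! 3 - zs ! 1)) (zs ! 4)) (zs ! 2) (zs ! 0)"

definition match_children_args :: "(nat \<Rightarrow> nat) \<Rightarrow> (nat \<Rightarrow> nat) \<Rightarrow> (nat \<Rightarrow> nat) \<Rightarrow> nat list \<Rightarrow> nat" where
  "match_children_args f g I zs = match_children f g (\<lambda>_ _. match_pre1_at f g I ((f ^^ (zs ! 3 - zs ! 1)) (zs ! 4)) (zs ! 2) (zs ! 0))
      ((f ^^ (zs ! 3 - zs ! 1)) (zs ! 4)) (zs ! 2) ((f ^^ (zs ! 3 - Suc (zs ! 1))) (zs ! 4))"

definition greedy_step :: "(nat \<Rightarrow> nat) \<Rightarrow> (nat \<Rightarrow> nat) \<Rightarrow> (nat \<Rightarrow> nat) \<Rightarrow> nat list \<Rightarrow> nat option" where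
  "greedy_step f g I xs = (case (if \<exists>k. split_decided_args f g I (k # xs) then Some (LEAST k. split_decided_args f g I (k # xs)) else None) of
      None \<Rightarrow> None | Some y \<Rightarrow> Some (match_children_args f g I (y # xs)))"

definition depth_search :: "(nat \<Rightarrow> nat) \<Rightarrow> nat \<Rightarrow> nat list \<Rightarrow> nat option" where
  "depth_search f a0 xs = (if \<exists>k. (f ^^ k) (xs ! 0) = a0 then Some (LEAST k. (f ^^ k) (xs ! 0) = a0) else None)"

definition greedy_prog :: "(nat \<Rightarrow> nat) \<Rightarrow> (nat \<Rightarrow> nat) \<Rightarrow> (nat \<Rightarrow> nat) \<Rightarrow> nat \<Rightarrow> nat \<Rightarrow> nat \<Rightarrow> nat option" where
  "greedy_prog f g I a0 b0 a = (case depth_search f a0 [a] of None \<Rightarrow> None | Some d \<Rightarrow> partial_prim_rec (\<lambda>_. Some b0) (greedy_step f g I) d [d, a])"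

context
  fixes f g :: "nat \<Rightarrow> nat" and I :: "nat \<Rightarrow> nat"
  assumes f21: "is_21_1 f" and g21: "is_21_1 g" and cf: "computable f" and cg: "computable g"
    and cbf: "computable (branching f)" and cbg: "computable (branching g)"
    and cI: "computable I"
begin

lemma partial_computable_greedy_prog: "partial_computable (greedy_prog f g I a0 b0)"
proof -
  note intros = rec_intros total_rec_computable[OF cI]
    total_rec_computable[OF cbf] total_rec_computable[OF cbg]
    total_rec_tree_code[OF cf f21 cbf] total_rec_tree_code[OF cg g21 cbg]
    total_rec_pre1[OF cf f21] total_rec_pre2[OF cf f21 cbf] total_rec_pre1[OF cg g21] total_rec_pre2[OF cg g21 cbg]
    total_rec_funpow[OF cf[unfolded computable_iff_total_rec]]
  have decided: "rec_pred (Suc 4) (split_decided_args f g I)"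
    unfolding split_decided_args_def split_decided_def by (intro intros; simp)
  have matching: "total_rec (Suc 4) (match_children_args f g I)"
    unfolding match_children_args_def match_children_def match_pre1_at_def by (intro intros; simp)
  have step: "partial_rec 4 (greedy_step f g I)"
    unfolding greedy_step_def by (rule partial_rec_let[OF partial_rec_LEAST[OF decided] matching])
  have "partial_rec (Suc 2) (\<lambda>ys. partial_prim_rec (\<lambda>_. Some b0) (greedy_step f g I) (hd ys) (tl ys))"
    by (rule partial_rec_prim_rec[OF total_rec_const[folded partial_rec_Some_iff]])
      (use step in \<open>simp add: numeral_eq_Suc\<close>)
  from partial_rec_comp[OF this, of "[\<lambda>xs. xs ! 0, \<lambda>xs. xs ! 0, \<lambda>xs. xs ! 1]"]
  have iter: "partial_rec (Suc (Suc 0))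
      (\<lambda>xs. partial_prim_rec (\<lambda>_. Some b0) (greedy_step f g I) (xs ! 0) [xs ! 0, xs ! 1])"
    by (simp add: total_rec_proj)
  have "rec_pred (Suc (Suc 0)) (\<lambda>ys. (f ^^ (ys ! 0)) (ys ! 1) = a0)"
    by (intro intros; simp)
  then have "partial_rec (Suc 0) (depth_search f a0)"
    unfolding depth_search_def by (rule partial_rec_cong[OF partial_rec_LEAST]) simp
  from partial_rec_bind[OF this iter]
  show ?thesis unfolding partial_computable_iff_partial_rec greedy_prog_def One_nat_def
    by (rule partial_rec_cong) (auto simp: length_Suc_conv split: option.split)
qed

end

lemma greedy_step_eq:
  assumes "\<exists>n. split_decided f g I ((f ^^ (d - i)) a) q n"
  shows "greedy_step f g I [i, q, d, a] =
    Some (match_children f g (split_choice f g I) ((f ^^ (d - i)) a) q ((f ^^ (d - Suc i)) a))"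
proof -
  let ?p = "(f ^^ (d - i)) a"
  have "greedy_step f g I [i, q, d, a] = Some (match_children f g
      (\<lambda>_ _. match_pre1_at f g I ?p q (LEAST k. split_decided f g I ?p q k)) ?p q ((f ^^ (d - Suc i)) a))"
    using assms unfolding greedy_step_def split_decided_args_def match_children_args_def by simp
  then show ?thesis by (simp add: match_children_def split_choice_def)
qed

lemma greedy_prog_correct:
  assumes f21: "is_21_1 f" and g21: "is_21_1 g" and nca: "\<not> cyclic f a0" and ncb: "\<not> cyclic g b0"
    and I_iso: "\<And>p. branching f p = 2 \<Longrightarrow> I p = iso_fun f p" and E0: "code_equiv f g a0 b0"
    and a: "a \<in> tree f a0"
  shows "greedy_prog f g I a0 b0 a = Some (greedy_iso.greedy_map f g a0 b0 (split_choice f g I) a)"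
proof -
  interpret C: greedy_iso f g a0 b0 "split_choice f g I" by (rule greedy_iso_split_choice[OF f21 g21 nca I_iso ncb E0])
  define d where "d = depth f a0 a"
  have ex: "\<exists>k. (f ^^ k) a = a0" using a unfolding tree_def by auto
  have D: "depth_search f a0 [a] = Some d" unfolding depth_search_def d_def depth_def using ex by auto
  have fd: "(f ^^ d) a = a0" unfolding d_def by (rule funpow_depth[OF a])
  have main: "i \<le> d \<Longrightarrow>
      partial_prim_rec (\<lambda>_. Some b0) (greedy_step f g I) i [d, a] = Some (greedy_map_aux f (match_children f g (split_choice f g I)) b0 i ((f ^^ (d - i)) a))" for i
  proof (induction i)
    case 0 then show ?case by simp
  next
    case (Suc i)
    define p where "p = (f ^^ (d - i)) a"
    define ch where "ch = (f ^^ (d - Suc i)) a"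
    define y where "y = greedy_map_aux f (match_children f g (split_choice f g I)) b0 i p"
    have IH: "partial_prim_rec (\<lambda>_. Some b0) (greedy_step f g I) i [d, a] = Some y" using Suc unfolding y_def p_def by simp
    have fch: "f ch = p" unfolding ch_def p_def using Suc.prems
      by (metis Suc_diff_Suc Suc_le_lessD funpow_simps_right(2) comp_apply funpow_swap1)
    have "(f ^^ i) p = a0" unfolding p_def using Suc.prems fd
      by (metis Suc_leD funpow_add le_add_diff_inverse comp_apply)
    then have pt: "p \<in> tree f a0" and pd: "depth f a0 p = i"
      unfolding tree_def using depth_eq[OF nca] by auto
    have yimg: "y = C.greedy_map p" unfolding C.greedy_map_def y_def pd by simp
    have Ep: "code_equiv f g p y" using C.greedy_map_code_equiv[OF pt] yimg by simp
    have exn: "\<exists>n. split_decided f g I p y n" using split_choice_correct[OF f21 g21 nca I_iso pt Ep] by blast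
    have "greedy_step f g I [i, y, d, a] = Some (match_children f g (split_choice f g I) p y ch)"
      using greedy_step_eq[OF exn[unfolded p_def]] unfolding p_def ch_def .
    moreover have "greedy_map_aux f (match_children f g (split_choice f g I)) b0 (Suc i) ch = match_children f g (split_choice f g I) p y ch"
      using fch unfolding y_def by simp
    ultimately show ?case using IH ch_def by simp
  qed
  have "partial_prim_rec (\<lambda>_. Some b0) (greedy_step f g I) d [d, a] = Some (C.greedy_map a)"
    using main[of d] unfolding C.greedy_map_def d_def by simp
  then show ?thesis unfolding greedy_prog_def D by simp
qed

lemma computable_Tree_iso:
  assumes f21: "is_21_1 f" and g21: "is_21_1 g" and cf: "computable f" and cg: "computable g"
    and cbf: "computable (branching f)" and cbg: "computable (branching g)"
    and cI: "computable I"
    and nca: "\<not> cyclic f a0" and ncb: "\<not> cyclic g b0"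
    and I_iso: "\<And>p. branching f p = 2 \<Longrightarrow> I p = iso_fun f p" and TI: "Tree_isomorphic f a0 g b0"
  shows "\<exists>\<phi>. partial_computable \<phi> \<and>
      (\<forall>a\<in>tree f a0. \<phi> a \<noteq> None) \<and> Tree_iso f a0 g b0 (\<lambda>a. the (\<phi> a))"
proof -
  have E0: "code_equiv f g a0 b0" by (rule Tree_isomorphic_imp_code_equiv[OF f21 g21 nca ncb TI])
  interpret C: greedy_iso f g a0 b0 "split_choice f g I" by (rule greedy_iso_split_choice[OF f21 g21 nca I_iso ncb E0])
  have computable: "partial_computable (greedy_prog f g I a0 b0)"
    by (rule partial_computable_greedy_prog[OF f21 g21 cf cg cbf cbg cI])
  have cor: "\<And>a. a \<in> tree f a0 \<Longrightarrow> greedy_prog f g I a0 b0 a = Some (C.greedy_map a)"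
    by (rule greedy_prog_correct[OF f21 g21 nca ncb I_iso E0])
  have "Tree_iso f a0 g b0 (\<lambda>a. the (greedy_prog f g I a0 b0 a))"
    by (rule Tree_iso_cong[OF C.greedy_map_Tree_iso]) (simp add: cor)
  then show ?thesis using computable cor by blast
qed

section \<open>Extended trees of cyclic elements\<close>

lemma funpow_add_apply: "(f ^^ (a + b)) x = (f ^^ a) ((f ^^ b) x)"
  by (simp add: funpow_add)

context
  fixes f :: "nat \<Rightarrow> nat" and c :: nat
  assumes cc: "cyclic f c"
begin

abbreviation "K \<equiv> cycle_len f c"

lemma cycle_len_period: "0 < K \<and> (f ^^ K) c = c"
  using cc unfolding cyclic_def cycle_len_def by (metis (mono_tags, lifting) LeastI)

lemma cycle_len_le: "0 < t \<Longrightarrow> (f ^^ t) c = c \<Longrightarrow> K \<le> t"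
  unfolding cycle_len_def by (rule Least_le) simp

lemma funpow_cycle_len_mult: "(f ^^ (K * q)) c = c"
  by (induction q) (auto simp: funpow_add_apply cycle_len_period simp del: funpow.simps)

lemma funpow_cycle_len_mod: "(f ^^ t) c = (f ^^ (t mod K)) c"
proof -
  have "t = t mod K + K * (t div K)" by simp
  then have "(f ^^ t) c = (f ^^ (t mod K)) ((f ^^ (K * (t div K))) c)" by (metis funpow_add_apply)
  then show ?thesis using funpow_cycle_len_mult by simp
qed

lemma funpow_mult_period: "(f ^^ P) z = z \<Longrightarrow> (f ^^ (j * P)) z = z"
  by (induction j) (auto simp: funpow_add_apply simp del: funpow.simps)

lemma cyclic_on_orbit: "cyclic f z \<Longrightarrow> (f ^^ j) z = c \<Longrightarrow> \<exists>t. z = (f ^^ t) c"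
proof -
  assume "cyclic f z" and j: "(f ^^ j) z = c"
  then obtain P where P: "P > 0" "(f ^^ P) z = z" unfolding cyclic_def by auto
  have "(f ^^ (j * (P - 1))) c = (f ^^ (j * (P - 1) + j)) z" using j by (simp add: funpow_add_apply)
  also have "j * (P - 1) + j = j * P" using P(1) by (cases P) auto
  also have "(f ^^ (j * P)) z = z" by (rule funpow_mult_period[OF P(2)])
  finally show ?thesis by metis
qed

lemma orbit_cycle_len_period: "z = (f ^^ t) c \<Longrightarrow> (f ^^ K) z = z"
  using cycle_len_period by (metis funpow_commute)

lemma cyclic_preimage_eq: "f z = c \<Longrightarrow> cyclic f z \<Longrightarrow> z = (f ^^ (K - 1)) c"
proof -
  assume fz: "f z = c" and cz: "cyclic f z"
  obtain t where t: "z = (f ^^ t) c" using cyclic_on_orbit[OF cz, of 1] fz by auto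
  define t' where "t' = t mod K"
  have zt: "z = (f ^^ t') c" using t funpow_cycle_len_mod unfolding t'_def by simp
  have tl: "t' < K" unfolding t'_def using cycle_len_period by auto
  have "(f ^^ Suc t') c = c" using zt fz by (simp add: funpow_swap1)
  then have "K \<le> Suc t'" using cycle_len_le by blast
  then have "t' = K - 1" using tl by simp
  then show ?thesis using zt by simp
qed

definition cycle_pred where "cycle_pred = (f ^^ (K - 1)) c"

lemma f_cycle_pred: "f cycle_pred = c"
  unfolding cycle_pred_def using cycle_len_period by (metis Suc_diff_1 funpow.simps(2) comp_apply)

lemma cyclic_cycle_pred: "cyclic f cycle_pred"
  unfolding cyclic_def cycle_pred_def using cycle_len_period by (metis funpow_commute)

lemma period_test_iff_cyclic:
  assumes n: "(f ^^ n) a = c" and mn: "m \<le> n"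
  shows "(f ^^ (m + K)) a = (f ^^ m) a \<longleftrightarrow> cyclic f ((f ^^ m) a)"
proof -
  have shift: "(f ^^ (m + K)) a = (f ^^ K) ((f ^^ m) a)"
    by (simp only: add.commute[of m K] funpow_add_apply)
  have periodic: "(f ^^ K) ((f ^^ m) a) = (f ^^ m) a" if cz: "cyclic f ((f ^^ m) a)"
  proof -
    have "(f ^^ (n - m)) ((f ^^ m) a) = c" using n mn by (metis funpow_add_apply le_add_diff_inverse2)
    then obtain t where "(f ^^ m) a = (f ^^ t) c" using cyclic_on_orbit[OF cz] by blast
    then show ?thesis using orbit_cycle_len_period by blast
  qed
  show ?thesis
  proof
    assume "(f ^^ (m + K)) a = (f ^^ m) a"
    then show "cyclic f ((f ^^ m) a)"
      unfolding cyclic_def using shift cycle_len_period by auto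
  qed (use shift periodic in simp)
qed

lemma extree_eq: "extree f c = {a. \<exists>n. (f ^^ n) a = c \<and> (\<forall>m<n. \<not> cyclic f ((f ^^ m) a))}"
proof -
  have e: "(f ^^ n) a = c \<Longrightarrow>
      (\<forall>m<n. (f ^^ (m + K)) a \<noteq> (f ^^ m) a) \<longleftrightarrow> (\<forall>m<n. \<not> cyclic f ((f ^^ m) a))" for n a
    using period_test_iff_cyclic[of n a] by (meson less_imp_le_nat)
  show ?thesis unfolding extree_def using e by blast
qed

lemma root_in_extree: "c \<in> extree f c"
  unfolding extree_eq by (auto intro: exI[of _ 0])

lemma extree_in_subtree: "a \<in> extree f c \<Longrightarrow> a \<noteq> c \<Longrightarrow>
    \<exists>z. f z = c \<and> \<not> cyclic f z \<and> a \<in> tree f z"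
proof -
  assume "a \<in> extree f c" "a \<noteq> c"
  then obtain n where n: "(f ^^ n) a = c" "\<forall>m<n. \<not> cyclic f ((f ^^ m) a)" unfolding extree_eq by auto
  then obtain k where k: "n = Suc k" using \<open>a \<noteq> c\<close> by (cases n) auto
  have "f ((f ^^ k) a) = c" using n k by simp
  moreover have "\<not> cyclic f ((f ^^ k) a)" using n k by auto
  moreover have "a \<in> tree f ((f ^^ k) a)" unfolding tree_def by auto
  ultimately show ?thesis by blast
qed

lemma tree_in_extree: "f z = c \<Longrightarrow> \<not> cyclic f z \<Longrightarrow> a \<in> tree f z \<Longrightarrow> a \<in> extree f c"
proof -
  assume fz: "f z = c" and nz: "\<not> cyclic f z" and a: "a \<in> tree f z"
  then obtain j where j: "(f ^^ j) a = z" unfolding tree_def by auto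
  have "(f ^^ Suc j) a = c" using j fz by simp
  moreover have "\<not> cyclic f ((f ^^ m) a)" if "m < Suc j" for m
  proof -
    have "(f ^^ (j - m)) ((f ^^ m) a) = z" using j that by (metis funpow_add_apply le_add_diff_inverse2 less_Suc_eq_le)
    then show ?thesis using not_cyclic_below[OF nz] by blast
  qed
  ultimately show ?thesis unfolding extree_eq by blast
qed

end

lemma cyclic_root_notin_tree: "f z = c \<Longrightarrow> \<not> cyclic f z \<Longrightarrow> c \<notin> tree f z"
proof
  assume fz: "f z = c" and nz: "\<not> cyclic f z" and "c \<in> tree f z"
  then obtain j where "(f ^^ j) c = z" unfolding tree_def by auto
  then have "(f ^^ Suc j) z = z" using fz by (simp add: funpow_swap1)
  then show False using nz unfolding cyclic_def by blast
qed

lemma eq_root_if_same_image: "\<not> cyclic f z \<Longrightarrow> a \<in> tree f z \<Longrightarrow> f a = f z \<Longrightarrow> a = z"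
  using depth_Suc f_root_notin_tree by metis

lemma extree_eq_singleton:
  assumes cc: "cyclic f c" and "\<And>z. f z = c \<Longrightarrow> cyclic f z"
  shows "extree f c = {c}"
proof
  show "extree f c \<subseteq> {c}"
  proof
    fix a assume a: "a \<in> extree f c"
    show "a \<in> {c}"
    proof (rule ccontr)
      assume "a \<notin> {c}"
      then obtain z where "f z = c" "\<not> cyclic f z" using extree_in_subtree[OF cc a] by auto
      then show False using assms(2) by blast
    qed
  qed
qed (use root_in_extree[OF cc] in auto)

lemma extree_eq_insert_tree:
  assumes cc: "cyclic f c" and z: "f z = c" "\<not> cyclic f z"
    and uniq: "\<And>z'. f z' = c \<Longrightarrow> \<not> cyclic f z' \<Longrightarrow> z' = z"
  shows "extree f c = insert c (tree f z)"
proof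
  show "extree f c \<subseteq> insert c (tree f z)"
  proof
    fix a assume a: "a \<in> extree f c"
    show "a \<in> insert c (tree f z)"
    proof (cases "a = c")
      case False
      then obtain z' where "f z' = c" "\<not> cyclic f z'" "a \<in> tree f z'"
        using extree_in_subtree[OF cc a] by auto
      then show ?thesis using uniq by auto
    qed simp
  qed
  show "insert c (tree f z) \<subseteq> extree f c"
    using root_in_extree[OF cc] tree_in_extree[OF cc z] by auto
qed

lemma extree_cases:
  assumes f: "is_21_1 f" and cc: "cyclic f c"
  shows "(branching f c \<noteq> 2 \<and> extree f c = {c}) \<or>
         (branching f c = 2 \<and> (\<exists>z. f z = c \<and> \<not> cyclic f z \<and> extree f c = insert c (tree f z) \<and> c \<notin> tree f z))"
proof -
  have on_cycle: "f z = c \<Longrightarrow> cyclic f z \<longleftrightarrow> z = cycle_pred f c" for z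
    using cyclic_preimage_eq[OF cc] cyclic_cycle_pred[OF cc] unfolding cycle_pred_def[OF cc] by auto
  have fcp: "f (cycle_pred f c) = c" by (rule f_cycle_pred[OF cc])
  show ?thesis
  proof (cases "branching f c = 2")
    case False
    then have "pre2 f c = pre1 f c" by (rule pre2_eq_pre1[OF f])
    then have "f z = c \<Longrightarrow> z = cycle_pred f c" for z
      using preimage_iff[OF f, of z c] preimage_iff[OF f, of "cycle_pred f c" c] fcp by auto
    then have "extree f c = {c}"
      by (intro extree_eq_singleton[OF cc]) (simp add: on_cycle cyclic_cycle_pred[OF cc])
    then show ?thesis using False by blast
  next
    case True
    define z where "z = (if pre1 f c = cycle_pred f c then pre2 f c else pre1 f c)"
    have fz: "f z = c" unfolding z_def using f_pre1[OF f] f_pre2[OF f] by auto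
    have cp: "cycle_pred f c = pre1 f c \<or> cycle_pred f c = pre2 f c"
      using preimage_iff[OF f] fcp by blast
    have "z \<noteq> cycle_pred f c" unfolding z_def using pre2_neq_pre1[OF f True] cp by auto
    then have nz: "\<not> cyclic f z" using on_cycle[OF fz] by blast
    have "z' = z" if z': "f z' = c" "\<not> cyclic f z'" for z'
    proof -
      have "z' = pre1 f c \<or> z' = pre2 f c" "z' \<noteq> cycle_pred f c"
        using preimage_iff[OF f] on_cycle z' by blast+
      then show ?thesis using cp unfolding z_def by auto
    qed
    then have "extree f c = insert c (tree f z)" by (rule extree_eq_insert_tree[OF cc fz nz])
    then show ?thesis using True fz nz cyclic_root_notin_tree[OF fz nz] by blast
  qed
qed

lemma extree_succ: "cyclic f c \<Longrightarrow> b \<in> extree f c \<Longrightarrow> b \<noteq> c \<Longrightarrow> f b \<in> extree f c"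
proof -
  assume cc: "cyclic f c" and b: "b \<in> extree f c" and ne: "b \<noteq> c"
  then obtain n where n: "(f ^^ n) b = c" "\<forall>m<n. \<not> cyclic f ((f ^^ m) b)" unfolding extree_eq[OF cc] by auto
  then obtain k where k: "n = Suc k" using ne by (cases n) auto
  have "(f ^^ k) (f b) = c" using n k by (simp add: funpow_swap1[symmetric] funpow_Suc_right)
  moreover have "\<forall>m<k. \<not> cyclic f ((f ^^ m) (f b))"
    using n k by (metis Suc_mono funpow_Suc_right comp_apply)
  ultimately show ?thesis unfolding extree_eq[OF cc] by blast
qed

lemma exTree_iso_root:
  assumes cc: "cyclic f c" and cd: "cyclic g d" and h: "exTree_iso f c g d h"
  shows "h c = d"
proof (rule ccontr)
  assume ne: "h c \<noteq> d"
  have bij: "bij_betw h (extree f c) (extree g d)"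
    and edge: "\<forall>a\<in>extree f c. \<forall>b\<in>extree f c. extree_edge f c a b \<longleftrightarrow> extree_edge g d (h a) (h b)"
    using h unfolding exTree_iso_def digraph_iso_def by auto
  have hc: "h c \<in> extree g d" using bij root_in_extree[OF cc] by (metis bij_betw_apply)
  then have "g (h c) \<in> extree g d" using extree_succ[OF cd hc ne] by auto
  then obtain a where a: "a \<in> extree f c" "h a = g (h c)" using bij by (metis bij_betw_def imageE)
  then have "extree_edge g d (h c) (h a)" using ne unfolding extree_edge_def by auto
  then have "extree_edge f c c a" using edge a root_in_extree[OF cc] by blast
  then show False unfolding extree_edge_def by auto
qed

lemma partial_computable_upd:
  assumes \<psi>: "partial_computable \<psi>" and defined: "\<psi> z \<noteq> None"
  shows "partial_computable (\<psi>(c := Some d))"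
proof -
  \<comment> \<open>Evaluating \<open>\<psi>\<close> at the defined point \<open>z\<close> instead of \<open>c\<close> keeps the program total at \<open>c\<close>.\<close>
  have "total_rec 1 (\<lambda>xs. if xs ! 0 = c then z else xs ! 0)"
    by (intro rec_intros) auto
  then have "partial_rec 1 (\<lambda>xs. \<psi> (if xs ! 0 = c then z else xs ! 0))"
    using partial_rec_comp[OF \<psi>[unfolded partial_computable_iff_partial_rec],
        of "[\<lambda>xs. if xs ! 0 = c then z else xs ! 0]"] by simp
  moreover have "total_rec (Suc 1) (\<lambda>ys. if ys ! 1 = c then d else ys ! 0)"
    by (intro rec_intros) auto
  ultimately have "partial_rec 1 (\<lambda>xs. case \<psi> (if xs ! 0 = c then z else xs ! 0) of
      None \<Rightarrow> None | Some y \<Rightarrow> Some ((\<lambda>ys. if ys ! 1 = c then d else ys ! 0) (y # xs)))"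
    by (rule partial_rec_let)
  then show ?thesis unfolding partial_computable_iff_partial_rec
    by (rule partial_rec_cong) (use defined in \<open>auto split: option.split\<close>)
qed

lemma partial_computable_const: "partial_computable (\<lambda>_. Some d)"
  unfolding partial_computable_iff_partial_rec by (rule total_rec_const[folded partial_rec_Some_iff])

lemma exTree_iso_restrict:
  assumes h: "exTree_iso f c g d h" and hc: "h c = d"
    and z: "extree f c = insert c (tree f z)" "c \<notin> tree f z" "f z = c"
    and w: "extree g d = insert d (tree g w)" "d \<notin> tree g w"
  shows "Tree_iso f z g w h"
proof -
  have bij: "bij_betw h (extree f c) (extree g d)"
    and edge: "\<forall>a\<in>extree f c. \<forall>b\<in>extree f c. extree_edge f c a b \<longleftrightarrow> extree_edge g d (h a) (h b)"
    using h unfolding exTree_iso_def digraph_iso_def by auto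
  have "bij_betw h (extree f c - {c}) (extree g d - {d})"
    by (rule bij_betw_DiffI[OF bij]) (use hc z(1) w(1) in auto)
  then have bij': "bij_betw h (tree f z) (tree g w)"
    using z w by simp
  show ?thesis
    unfolding Tree_iso_def digraph_iso_def tree_edge_def
  proof (intro conjI ballI bij')
    fix a b assume a: "a \<in> tree f z" and b: "b \<in> tree f z"
    have "a \<noteq> c" "h a \<noteq> d" using a z(2) w(2) bij_betw_apply[OF bij' a] by auto
    then show "f a = b \<longleftrightarrow> g (h a) = h b" using edge a b z unfolding extree_edge_def by auto
  qed
qed

lemma exTree_iso_extend:
  assumes m: "Tree_iso f z g w m"
    and z: "extree f c = insert c (tree f z)" "c \<notin> tree f z" "f z = c" "\<not> cyclic f z"
    and w: "extree g d = insert d (tree g w)" "d \<notin> tree g w" "g w = d" "\<not> cyclic g w"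
  shows "exTree_iso f c g d (m(c := d))"
proof -
  have bij: "bij_betw m (tree f z) (tree g w)"
    and edge: "\<forall>a\<in>tree f z. \<forall>b\<in>tree f z. f a = b \<longleftrightarrow> g (m a) = m b"
    using m unfolding Tree_iso_def digraph_iso_def tree_edge_def by auto
  have mz: "m z = w" by (rule Tree_iso_root[OF z(4) w(4) m])
  have to_root: "f a = c \<longleftrightarrow> g (m a) = d" if a: "a \<in> tree f z" for a
  proof -
    have "f a = c \<longleftrightarrow> a = z" using eq_root_if_same_image[OF z(4) a] z(3) by auto
    also have "\<dots> \<longleftrightarrow> m a = w"
      using bij a root_in_tree mz by (metis bij_betw_imp_inj_on inj_onD)
    also have "\<dots> \<longleftrightarrow> g (m a) = d"
      using eq_root_if_same_image[OF w(4) bij_betw_apply[OF bij a]] w(3) by auto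
    finally show ?thesis .
  qed
  show ?thesis
    unfolding exTree_iso_def digraph_iso_def z(1) w(1)
  proof (intro conjI ballI)
    show "bij_betw (m(c := d)) (insert c (tree f z)) (insert d (tree g w))"
      using bij z(2) w(2) unfolding bij_betw_def inj_on_def by (auto simp: image_def)
  next
    fix a b assume "a \<in> insert c (tree f z)" "b \<in> insert c (tree f z)"
    then show "extree_edge f c a b \<longleftrightarrow> extree_edge g d ((m(c := d)) a) ((m(c := d)) b)"
      using edge to_root bij_betw_apply[OF bij] z(2) w(2) unfolding extree_edge_def
      by (cases "a = c"; cases "b = c") auto
  qed
qed

lemma computable_exTree_iso:
  assumes f21: "is_21_1 f" and g21: "is_21_1 g" and cf: "computable f" and cg: "computable g"
    and cbf: "computable (branching f)" and cbg: "computable (branching g)"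
    and cI: "computable I" and I_iso: "\<And>p. branching f p = 2 \<Longrightarrow> I p = iso_fun f p"
    and cc: "cyclic f c" and cd: "cyclic g d" and h: "exTree_iso f c g d h"
  shows "\<exists>\<phi>. partial_computable \<phi> \<and>
      (\<forall>a\<in>extree f c. \<phi> a \<noteq> None) \<and> exTree_iso f c g d (\<lambda>a. the (\<phi> a))"
proof -
  have bij: "bij_betw h (extree f c) (extree g d)"
    using h unfolding exTree_iso_def digraph_iso_def by auto
  have hc: "h c = d" by (rule exTree_iso_root[OF cc cd h])
  from extree_cases[OF f21 cc] show ?thesis
  proof
    assume "branching f c \<noteq> 2 \<and> extree f c = {c}"
    moreover from this have "extree g d = {d}" using bij hc by (auto simp: bij_betw_def)
    ultimately have "exTree_iso f c g d (\<lambda>_. d)"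
      unfolding exTree_iso_def digraph_iso_def by (auto simp: extree_edge_def bij_betw_def)
    then show ?thesis using partial_computable_const by fastforce
  next
    assume "branching f c = 2 \<and> (\<exists>z. f z = c \<and>
        \<not> cyclic f z \<and> extree f c = insert c (tree f z) \<and> c \<notin> tree f z)"
    then obtain z where z: "f z = c" "\<not> cyclic f z" "extree f c = insert c (tree f z)" "c \<notin> tree f z" by blast
    have "h z \<in> extree g d" "h z \<noteq> d"
      using bij hc z root_in_tree unfolding bij_betw_def inj_on_def by (blast, metis insert_iff)
    then obtain w where w: "g w = d" "\<not> cyclic g w" "extree g d = insert d (tree g w)" "d \<notin> tree g w"
      using extree_cases[OF g21 cd] by blast
    have "Tree_isomorphic f z g w"
      using exTree_iso_restrict[OF h hc z(3,4,1) w(3,4)] unfolding Tree_isomorphic_def by blast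
    then obtain \<psi> where \<psi>: "partial_computable \<psi>" "\<forall>a\<in>tree f z. \<psi> a \<noteq> None" "Tree_iso f z g w (\<lambda>a. the (\<psi> a))"
      using computable_Tree_iso[OF f21 g21 cf cg cbf cbg cI z(2) w(2) I_iso] by blast
    have "partial_computable (\<psi>(c := Some d))"
      using partial_computable_upd \<psi>(1,2) root_in_tree by blast
    moreover have "(\<lambda>a. the ((\<psi>(c := Some d)) a)) = (\<lambda>a. the (\<psi> a))(c := d)" by auto
    moreover have "\<forall>a\<in>extree f c. (\<psi>(c := Some d)) a \<noteq> None" using \<psi>(2) z(3) by auto
    ultimately show ?thesis
      using exTree_iso_extend[OF \<psi>(3) z(3,4,1,2) w(3,4,1,2)] by metis
  qed
qed

theorem lemma2p9:
  fixes f g :: "nat \<Rightarrow> nat"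
  assumes "is_21_1 f" and "is_21_1 g"
    and "computable f" and "computable g"
    and "struct_iso f g"
    and "computable (branching f)" and "computable (branching g)"
    and "iso_computable f" and "iso_computable g"
  shows "(\<forall>a0 b0. \<not> cyclic f a0 \<and> \<not> cyclic g b0 \<and> Tree_isomorphic f a0 g b0 \<longrightarrow>
           (\<exists>\<phi>. partial_computable \<phi> \<and> (\<forall>a\<in>tree f a0. \<phi> a \<noteq> None) \<and>
                 Tree_iso f a0 g b0 (\<lambda>a. the (\<phi> a))))
       \<and> (\<forall>c d. cyclic f c \<and> cyclic g d \<and> (\<exists>h. exTree_iso f c g d h) \<longrightarrow>
           (\<exists>\<phi>. partial_computable \<phi> \<and> (\<forall>a\<in>extree f c. \<phi> a \<noteq> None) \<and>
                 exTree_iso f c g d (\<lambda>a. the (\<phi> a))))"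
proof -
  obtain I where I: "computable I" "\<forall>p. branching f p = 2 \<longrightarrow> I p = iso_fun f p"
    using computable_iso_fun_on_split_hair[OF assms(6) assms(8)] by blast
  show ?thesis
  proof (intro conjI allI impI)
    fix a0 b0 assume "\<not> cyclic f a0 \<and> \<not> cyclic g b0 \<and> Tree_isomorphic f a0 g b0"
    then show "\<exists>\<phi>. partial_computable \<phi> \<and>
        (\<forall>a\<in>tree f a0. \<phi> a \<noteq> None) \<and> Tree_iso f a0 g b0 (\<lambda>a. the (\<phi> a))"
      using computable_Tree_iso[OF assms(1-4) assms(6,7) I(1)] I(2) by blast
  next
    fix c d assume "cyclic f c \<and> cyclic g d \<and> (\<exists>h. exTree_iso f c g d h)"
    then show "\<exists>\<phi>. partial_computable \<phi> \<and>
        (\<forall>a\<in>extree f c. \<phi> a \<noteq> None) \<and> exTree_iso f c g d (\<lambda>a. the (\<phi> a))"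
      using computable_exTree_iso[OF assms(1-4) assms(6,7) I(1)] I(2) by blast
  qed
qed

end
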